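(* The set $\mathcal{L}_3$ of lines which meet $\mathcal{C}$ in exactly one point, are contained in an osculating plane of $\mathcal{C}$, and are not tangent lines of $\mathcal{C}$, is a single $G$-orbit, and every $\ell\in\mathcal{L}_3$ satisfies $OD_2(\ell)=OD_0(\ell)=[1,1,\tfrac{q-1}{2},\tfrac{q-1}{2},0]$.
   Context: Let $q$ be a power of a prime $p$, with $p\neq 2,3$. In $\mathrm{PG}(3,q)$ with coordinates $(Y_0,\dots,Y_3)$, the twisted cubic is $\mathcal{C}=\{P(t)=(1,t,t^2,t^3):t\in\mathbb{F}_q\}\cup\{P(\infty)=(0,0,0,1)\}$. $G\le \mathrm{PGL}(4,q)$ is the image of $\mathrm{PGL}(2,q)$ under the map sending the matrix $\begin{pmatrix}a&b\\c&d\end{pmatrix}$ to $\begin{pmatrix} a^3&a^2b&ab^2&b^3\\ 3a^2c&a^2d+2abc&b^2c+2abd&3b^2d\\ 3ac^2&bc^2+2acd&ad^2+2bcd&3bd^2\\ c^3&c^2d&cd^2&d^3\end{pmatrix}$. Osculating planes: $\Pi(t):-t^3Y_0+3t^2Y_1-3tY_2+Y_3=0$ ($t\in\mathbb{F}_q$), $\Pi(\infty):Y_0=0$. Tangent line at $P\in\mathcal{C}$: the line through $P$ meeting $\mathcal{C}$ with multiplicity two at $P$. Point classes: $\mathcal{P}_1$ = points of $\mathcal{C}$; $\mathcal{P}_2$ = points not on $\mathcal{C}$ on a tangent line; $\mathcal{P}_3$ = points not on $\mathcal{C}$ on exactly three osculating planes; $\mathcal{P}_4$ = points not on $\mathcal{C}$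 on exactly one osculating plane; $\mathcal{P}_5$ = points on no osculating plane. Plane classes: $\mathcal{H}_1$ = osculating planes; $\mathcal{H}_2$ = planes meeting $\mathcal{C}$ in exactly two points; $\mathcal{H}_3$ = exactly three points; $\mathcal{H}_4$ = non-osculating planes meeting $\mathcal{C}$ in exactly one point; $\mathcal{H}_5$ = planes disjoint from $\mathcal{C}$. $OD_0(\ell)$ (resp. $OD_2(\ell)$) is the list of the numbers of points of $\ell$ in $\mathcal{P}_1,\dots,\mathcal{P}_5$ (resp. planes through $\ell$ in $\mathcal{H}_1,\dots,\mathcal{H}_5$). *)

theory Defs
  imports Main
begin

section \<open>PG(3,q) over a finite field 'a, q = CARD('a)\<close>

type_synonym 'a vec4 = "'a \<times> 'a \<times> 'a \<times> 'a"

fun sm :: "'a::field \<Rightarrow> 'a vec4 \<Rightarrow> 'a vec4" where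
  "sm c (x0, x1, x2, x3) = (c * x0, c * x1, c * x2, c * x3)"

fun vadd :: "'a::field vec4 \<Rightarrow> 'a vec4 \<Rightarrow> 'a vec4" where
  "vadd (x0, x1, x2, x3) (y0, y1, y2, y3) = (x0 + y0, x1 + y1, x2 + y2, x3 + y3)"

fun dot :: "'a::field vec4 \<Rightarrow> 'a vec4 \<Rightarrow> 'a" where
  "dot (h0, h1, h2, h3) (x0, x1, x2, x3) = h0 * x0 + h1 * x1 + h2 * x2 + h3 * x3"

definition zero4 :: "'a::field vec4" where
  "zero4 = (0, 0, 0, 0)"

definition proj_pt :: "'a::field vec4 \<Rightarrow> 'a vec4 set" where
  "proj_pt v = {sm c v | c. c \<noteq> 0}"

definition points :: "'a::field vec4 set set" where
  "points = {proj_pt v | v. v \<noteq> zero4}"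

definition indep :: "'a::field vec4 \<Rightarrow> 'a vec4 \<Rightarrow> bool" where
  "indep u w = (\<forall>a b. vadd (sm a u) (sm b w) = zero4 \<longrightarrow> a = 0 \<and> b = 0)"

definition line_of :: "'a::field vec4 \<Rightarrow> 'a vec4 \<Rightarrow> 'a vec4 set set" where
  "line_of u w = {proj_pt (vadd (sm a u) (sm b w)) | a b. a \<noteq> 0 \<or> b \<noteq> 0}"

definition lines :: "'a::field vec4 set set set" where
  "lines = {line_of u w | u w. indep u w}"

definition plane_of :: "'a::field vec4 \<Rightarrow> 'a vec4 set set" where
  "plane_of h = {proj_pt v | v. v \<noteq> zero4 \<and> dot h v = 0}"

definition planes :: "'a::field vec4 set set set" where
  "planes = {plane_of h | h. h \<noteq> zero4}"

definition cubic_pt :: "'a::field \<Rightarrow> 'a vec4 set" where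
  "cubic_pt t = proj_pt (1, t, t^2, t^3)"

definition cubic_inf :: "'a::field vec4 set" where
  "cubic_inf = proj_pt (0, 0, 0, 1)"

definition TC :: "'a::field vec4 set set" where
  "TC = range cubic_pt \<union> {cubic_inf}"

definition osc_plane :: "'a::field \<Rightarrow> 'a vec4 set set" where
  "osc_plane t = plane_of (- (t^3), 3 * t^2, - 3 * t, 1)"

definition osc_inf :: "'a::field vec4 set set" where
  "osc_inf = plane_of (1, 0, 0, 0)"

definition Osc :: "'a::field vec4 set set set" where
  "Osc = range osc_plane \<union> {osc_inf}"

text \<open>Tangent line at P(t): spanned by P(t) and the derivative point (0,1,2t,3t^2);
  at P(infinity): spanned by (0,0,0,1) and (0,0,1,0).\<close>
definition Tan :: "'a::field vec4 set set set" where
  "Tan = range (\<lambda>t. line_of (1, t, t^2, t^3) (0, 1, 2 * t, 3 * t^2))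
         \<union> {line_of (0, 0, 0, 1) (0, 0, 1, 0)}"

section \<open>The group G (row-vector convention: Y \<mapsto> Y M)\<close>

fun gact :: "'a::field \<Rightarrow> 'a \<Rightarrow> 'a \<Rightarrow> 'a \<Rightarrow> 'a vec4 \<Rightarrow> 'a vec4" where
  "gact a b c d (y0, y1, y2, y3) =
    (y0 * a^3 + y1 * (3 * a^2 * c) + y2 * (3 * a * c^2) + y3 * c^3,
     y0 * (a^2 * b) + y1 * (a^2 * d + 2 * a * b * c) + y2 * (b * c^2 + 2 * a * c * d) + y3 * (c^2 * d),
     y0 * (a * b^2) + y1 * (b^2 * c + 2 * a * b * d) + y2 * (a * d^2 + 2 * b * c * d) + y3 * (c * d^2),
     y0 * b^3 + y1 * (3 * b^2 * d) + y2 * (3 * b * d^2) + y3 * d^3)"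

definition Gmaps :: "('a::field vec4 set \<Rightarrow> 'a vec4 set) set" where
  "Gmaps = {(\<lambda>P. gact a b c d ` P) | a b c d. a * d - b * c \<noteq> 0}"

definition P1 :: "'a::field vec4 set set" where "P1 = TC"
definition P2 :: "'a::field vec4 set set" where
  "P2 = {P \<in> points. P \<notin> TC \<and> (\<exists>l\<in>Tan. P \<in> l)}"
definition P3 :: "'a::field vec4 set set" where
  "P3 = {P \<in> points. P \<notin> TC \<and> card {\<pi> \<in> Osc. P \<in> \<pi>} = 3}"
definition P4 :: "'a::field vec4 set set" where
  "P4 = {P \<in> points. P \<notin> TC \<and> card {\<pi> \<in> Osc. P \<in> \<pi>} = 1}"
definition P5 :: "'a::field vec4 set set" where
  "P5 = {P \<in> points. \<forall>\<pi>\<in>Osc. P \<notin> \<pi>}"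

definition H1 :: "'a::field vec4 set set set" where "H1 = Osc"
definition H2 :: "'a::field vec4 set set set" where
  "H2 = {\<pi> \<in> planes. card (\<pi> \<inter> TC) = 2}"
definition H3 :: "'a::field vec4 set set set" where
  "H3 = {\<pi> \<in> planes. card (\<pi> \<inter> TC) = 3}"
definition H4 :: "'a::field vec4 set set set" where
  "H4 = {\<pi> \<in> planes. \<pi> \<notin> Osc \<and> card (\<pi> \<inter> TC) = 1}"
definition H5 :: "'a::field vec4 set set set" where
  "H5 = {\<pi> \<in> planes. \<pi> \<inter> TC = {}}"

definition OD0 :: "'a::field vec4 set set \<Rightarrow> nat list" where
  "OD0 l = map (\<lambda>K. card (l \<inter> K)) [P1, P2, P3, P4, P5]"

definition OD2 :: "'a::field vec4 set set \<Rightarrow> nat list" where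
  "OD2 l = map (\<lambda>K. card {\<pi> \<in> K. l \<subseteq> \<pi>}) [H1, H2, H3, H4, H5]"

definition L3 :: "'a::field vec4 set set set" where
  "L3 = {l \<in> lines. card (l \<inter> TC) = 1 \<and> (\<exists>\<pi>\<in>Osc. l \<subseteq> \<pi>) \<and> l \<notin> Tan}"

end

(*
  The translations t \<mapsto> t + s and the inversion t \<mapsto> 1 / t of G are collineations fixing the cubic,
  the set of osculating planes and the set of tangents, so they preserve L3, OD0 and OD2.
  If a line of L3 meets the cubic in P(t), translating by -t and inverting moves that point to
  P(\<infinity>); a line of L3 through P(\<infinity>) lies in \<Pi>(\<infinity>) and is not the tangent there, so it
  is a line Linf s joining P(\<infinity>) to (0, 1, s, 0). Conversely, by the Bruhat decomposition every
  element of G is upper triangular or a translation after the inversion after an upper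
  triangular element, and the upper triangular elements map Linf 0 onto the lines Linf s; so L3 is
  the orbit of Linf 0. On Linf s the counts are explicit: its points (0, 1, s, \<mu>) and the planes
  through it other than \<Pi>(\<infinity>) are sorted into classes by whether a discriminant, affine in the
  parameter, is zero, a nonzero square or a nonsquare, and there are (q - 1)/2 of each of the
  last two kinds.
*)

theory Submission
  imports Defs
begin

section \<open>Coordinates, points, lines and planes\<close>

lemma sm_0 [simp]: "sm 0 v = zero4"
  by (cases v) (simp add: zero4_def)

lemma sm_1 [simp]: "sm 1 v = v"
  by (cases v) simp

lemma sm_sm [simp]: "sm a (sm b v) = sm (a * b) v"
  by (cases v) (simp add: mult.assoc)

lemma sm_eq_zero4_iff: "sm c v = zero4 \<longleftrightarrow> c = 0 \<or> v = zero4"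
  by (cases v rule: prod_cases4) (auto simp: zero4_def)

lemma vadd_zero4 [simp]: "vadd v zero4 = v" "vadd zero4 v = v"
  by (cases v rule: prod_cases4, simp add: zero4_def)+

lemma sm_vadd: "sm c (vadd u v) = vadd (sm c u) (sm c v)"
  by (cases v rule: prod_cases4; cases u rule: prod_cases4) (simp add: algebra_simps)

lemma dot_sm [simp]: "dot h (sm c v) = c * dot h v"
  by (cases v rule: prod_cases4; cases h rule: prod_cases4) (simp add: algebra_simps)

lemma dot_sm_left: "dot (sm c h) v = c * dot h v"
  by (cases v rule: prod_cases4; cases h rule: prod_cases4) (simp add: algebra_simps)

lemma dot_vadd [simp]: "dot h (vadd u v) = dot h u + dot h v"
  by (cases v rule: prod_cases4; cases u rule: prod_cases4; cases h rule: prod_cases4)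
    (simp add: algebra_simps)

lemma vadd_sm_combine:
  "vadd (sm a (vadd (sm \<alpha> u) (sm \<beta> w))) (sm b (vadd (sm \<gamma> u) (sm \<delta> w)))
   = vadd (sm (a * \<alpha> + b * \<gamma>) u) (sm (a * \<beta> + b * \<delta>) w)"
  by (cases w rule: prod_cases4; cases u rule: prod_cases4) (simp add: algebra_simps)

lemma proj_pt_sm: "c \<noteq> 0 \<Longrightarrow> proj_pt (sm c v) = proj_pt v"
  unfolding proj_pt_def
proof (intro set_eqI iffI)
  fix x assume c: "c \<noteq> 0" and "x \<in> {sm d v |d. d \<noteq> 0}"
  then obtain d where "d \<noteq> 0" "x = sm (d / c) (sm c v)" by auto
  then show "x \<in> {sm d (sm c v) |d. d \<noteq> 0}" using c by fastforce
qed auto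

lemma proj_pt_self: "v \<in> proj_pt v"
  unfolding proj_pt_def by (auto intro!: exI[of _ 1])

lemma proj_pt_eqD: "proj_pt v = proj_pt w \<Longrightarrow> \<exists>c. c \<noteq> 0 \<and> w = sm c v"
  using proj_pt_self[of w] unfolding proj_pt_def by auto

lemma proj_pt_eq_iff: "proj_pt v = proj_pt w \<longleftrightarrow> (\<exists>c. c \<noteq> 0 \<and> w = sm c v)"
  using proj_pt_eqD proj_pt_sm by metis

lemma proj_pt_in_points: "v \<noteq> zero4 \<Longrightarrow> proj_pt v \<in> points"
  unfolding points_def by blast

lemma line_ofE:
  assumes "P \<in> line_of u w"
  obtains a b where "a \<noteq> 0 \<or> b \<noteq> 0" "P = proj_pt (vadd (sm a u) (sm b w))"
  using assms unfolding line_of_def by auto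

lemma line_ofI: "a \<noteq> 0 \<or> b \<noteq> 0 \<Longrightarrow> proj_pt (vadd (sm a u) (sm b w)) \<in> line_of u w"
  unfolding line_of_def by auto

lemma proj_pt_in_line_of: "proj_pt u \<in> line_of u w" "proj_pt w \<in> line_of u w"
  using line_ofI[of 1 0 u w] line_ofI[of 0 1 u w] by simp_all

lemma proj_pt_in_line_ofD:
  assumes "proj_pt x \<in> line_of u w"
  shows "\<exists>a b. x = vadd (sm a u) (sm b w)"
proof -
  obtain a b where "proj_pt x = proj_pt (vadd (sm a u) (sm b w))"
    using assms by (auto elim: line_ofE)
  then obtain c where "x = sm c (vadd (sm a u) (sm b w))"
    by (metis proj_pt_eqD)
  then have "x = vadd (sm (c * a) u) (sm (c * b) w)"
    by (simp add: sm_vadd)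
  then show ?thesis by blast
qed

lemma line_of_change_basis:
  assumes u': "u' = vadd (sm \<alpha> u) (sm \<beta> w)" and w': "w' = vadd (sm \<gamma> u) (sm \<delta> w)"
    and det: "\<alpha> * \<delta> - \<beta> * \<gamma> \<noteq> 0"
  shows "line_of u' w' = line_of u w"
proof (intro set_eqI iffI)
  fix P assume "P \<in> line_of u' w'"
  then obtain a b where ab: "a \<noteq> 0 \<or> b \<noteq> 0" "P = proj_pt (vadd (sm a u') (sm b w'))"
    by (rule line_ofE)
  have "a * \<alpha> + b * \<gamma> \<noteq> 0 \<or> a * \<beta> + b * \<delta> \<noteq> 0"
  proof (rule ccontr)
    assume "\<not> ?thesis"
    then have "a * (\<alpha> * \<delta> - \<beta> * \<gamma>) = 0" "b * (\<alpha> * \<delta> - \<beta> * \<gamma>) = 0"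
      by algebra+
    then show False using ab det by auto
  qed
  then show "P \<in> line_of u w"
    using ab line_ofI by (simp add: u' w' vadd_sm_combine)
next
  fix P assume "P \<in> line_of u w"
  then obtain a' b' where ab: "a' \<noteq> 0 \<or> b' \<noteq> 0" "P = proj_pt (vadd (sm a' u) (sm b' w))"
    by (rule line_ofE)
  define D where "D = \<alpha> * \<delta> - \<beta> * \<gamma>"
  define a where "a = (a' * \<delta> - b' * \<gamma>) / D"
  define b where "b = (b' * \<alpha> - a' * \<beta>) / D"
  have D: "D \<noteq> 0" using det D_def by simp
  have aD: "a * D = a' * \<delta> - b' * \<gamma>" and bD: "b * D = b' * \<alpha> - a' * \<beta>"
    using D unfolding a_def b_def by simp_all
  have "(a * \<alpha> + b * \<gamma>) * D = a' * D" "(a * \<beta> + b * \<delta>) * D = b' * D"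
    using aD bD unfolding D_def by algebra+
  then have coeffs: "a * \<alpha> + b * \<gamma> = a'" "a * \<beta> + b * \<delta> = b'"
    using D by simp_all
  then have "a \<noteq> 0 \<or> b \<noteq> 0" using ab by auto
  then show "P \<in> line_of u' w'"
    using line_ofI[of a b u' w'] ab by (simp add: u' w' vadd_sm_combine coeffs)
qed

lemma indep_change_basis:
  assumes ind: "indep u w"
    and u': "u' = vadd (sm \<alpha> u) (sm \<beta> w)" and w': "w' = vadd (sm \<gamma> u) (sm \<delta> w)"
    and det: "\<alpha> * \<delta> - \<beta> * \<gamma> \<noteq> 0"
  shows "indep u' w'"
  unfolding indep_def
proof (intro allI impI)
  fix a b assume "vadd (sm a u') (sm b w') = zero4"
  then have "vadd (sm (a * \<alpha> + b * \<gamma>) u) (sm (a * \<beta> + b * \<delta>) w) = zero4"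
    by (simp add: u' w' vadd_sm_combine)
  then have "a * \<alpha> + b * \<gamma> = 0" "a * \<beta> + b * \<delta> = 0"
    using ind unfolding indep_def by blast+
  then have "a * (\<alpha> * \<delta> - \<beta> * \<gamma>) = 0" "b * (\<alpha> * \<delta> - \<beta> * \<gamma>) = 0"
    by algebra+
  then show "a = 0 \<and> b = 0" using det by auto
qed

lemma vadd_sm_minus: "vadd x (sm (- 1) x) = zero4"
  by (cases x rule: prod_cases4) (simp add: zero4_def)

lemma line_of_affine_param:
  assumes ind: "indep u w"
  shows "line_of u w = insert (proj_pt u) (range (\<lambda>\<mu>. proj_pt (vadd (sm \<mu> u) w)))"
proof (intro set_eqI iffI)
  fix P assume "P \<in> line_of u w"
  then obtain a b where ab: "a \<noteq> 0 \<or> b \<noteq> 0" "P = proj_pt (vadd (sm a u) (sm b w))"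
    by (rule line_ofE)
  show "P \<in> insert (proj_pt u) (range (\<lambda>\<mu>. proj_pt (vadd (sm \<mu> u) w)))"
  proof (cases "b = 0")
    case True
    then show ?thesis using ab proj_pt_sm[of a u] by simp
  next
    case False
    have "vadd (sm a u) (sm b w) = sm b (vadd (sm (a / b) u) w)"
      using False by (cases w rule: prod_cases4; cases u rule: prod_cases4) (simp add: field_simps)
    then have "P = proj_pt (vadd (sm (a / b) u) w)" using ab False proj_pt_sm by simp
    then show ?thesis by simp
  qed
next
  fix P assume "P \<in> insert (proj_pt u) (range (\<lambda>\<mu>. proj_pt (vadd (sm \<mu> u) w)))"
  then show "P \<in> line_of u w"
    using proj_pt_in_line_of(1)[of u w] line_ofI[of _ 1 u w] by auto
qed

lemma line_of_affine_param_inj: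
  assumes ind: "indep u w"
  shows "inj (\<lambda>\<mu>. proj_pt (vadd (sm \<mu> u) w))"
proof (rule injI)
  fix x y assume "proj_pt (vadd (sm x u) w) = proj_pt (vadd (sm y u) w)"
  then obtain c where c: "vadd (sm y u) w = sm c (vadd (sm x u) w)"
    by (auto simp: proj_pt_eq_iff)
  have "vadd (sm (y - c * x) u) (sm (1 - c) w)
        = vadd (vadd (sm y u) w) (sm (- 1) (sm c (vadd (sm x u) w)))"
    by (cases w rule: prod_cases4; cases u rule: prod_cases4) (simp add: algebra_simps)
  then have "vadd (sm (y - c * x) u) (sm (1 - c) w) = zero4"
    by (simp only: c vadd_sm_minus)
  then show "x = y" using ind unfolding indep_def by force
qed

lemma line_of_affine_param_notin:
  assumes ind: "indep u w"
  shows "proj_pt u \<notin> range (\<lambda>\<mu>. proj_pt (vadd (sm \<mu> u) w))"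
proof
  assume "proj_pt u \<in> range (\<lambda>\<mu>. proj_pt (vadd (sm \<mu> u) w))"
  then obtain x c where c: "vadd (sm x u) w = sm c u"
    by (auto simp: proj_pt_eq_iff)
  have "vadd (sm (x - c) u) (sm 1 w) = vadd (vadd (sm x u) w) (sm (- 1) (sm c u))"
    by (cases w rule: prod_cases4; cases u rule: prod_cases4) (simp add: algebra_simps)
  then have "vadd (sm (x - c) u) (sm 1 w) = zero4"
    by (simp only: c vadd_sm_minus)
  then show False using ind unfolding indep_def by (metis one_neq_zero)
qed

lemma card_line_of_Int:
  fixes K :: "'a::{field,finite} vec4 set set"
  assumes ind: "indep u w"
  shows "card (line_of u w \<inter> K)
    = (if proj_pt u \<in> K then 1 else 0) + card {\<mu>. proj_pt (vadd (sm \<mu> u) w) \<in> K}"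
proof -
  let ?f = "\<lambda>\<mu>. proj_pt (vadd (sm \<mu> u) w)"
  have split: "line_of u w \<inter> K = (if proj_pt u \<in> K then {proj_pt u} else {}) \<union> ?f ` {\<mu>. ?f \<mu> \<in> K}"
    using line_of_affine_param[OF ind] by auto
  have "card (?f ` {\<mu>. ?f \<mu> \<in> K}) = card {\<mu>. ?f \<mu> \<in> K}"
    using line_of_affine_param_inj[OF ind] by (simp add: card_image inj_on_subset)
  moreover have "proj_pt u \<notin> ?f ` {\<mu>. ?f \<mu> \<in> K}"
    using line_of_affine_param_notin[OF ind] by auto
  ultimately show ?thesis unfolding split by (simp add: card_insert_if)
qed

lemma proj_pt_in_plane_of_iff: "proj_pt v \<in> plane_of h \<longleftrightarrow> v \<noteq> zero4 \<and> dot h v = 0"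
proof
  assume "proj_pt v \<in> plane_of h"
  then obtain v' where "proj_pt v' = proj_pt v" "v' \<noteq> zero4" "dot h v' = 0"
    unfolding plane_of_def by auto
  moreover then obtain c where "c \<noteq> 0" "v = sm c v'" by (metis proj_pt_eqD)
  ultimately show "v \<noteq> zero4 \<and> dot h v = 0"
    by (simp add: sm_eq_zero4_iff)
qed (unfold plane_of_def, blast)

lemma plane_ofE:
  assumes "P \<in> plane_of h"
  obtains v where "P = proj_pt v" "v \<noteq> zero4" "dot h v = 0"
  using assms unfolding plane_of_def by auto

lemma plane_of_sm: "c \<noteq> 0 \<Longrightarrow> plane_of (sm c h) = plane_of h"
  unfolding plane_of_def by (simp add: dot_sm_left)

lemma line_of_subset_plane_of:
  assumes ind: "indep u w" and "dot h u = 0" and "dot h w = 0"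
  shows "line_of u w \<subseteq> plane_of h"
proof
  fix P assume "P \<in> line_of u w"
  then obtain a b where ab: "a \<noteq> 0 \<or> b \<noteq> 0" "P = proj_pt (vadd (sm a u) (sm b w))"
    by (rule line_ofE)
  have "vadd (sm a u) (sm b w) \<noteq> zero4" using ind ab(1) unfolding indep_def by blast
  then show "P \<in> plane_of h"
    using ab(2) assms by (simp add: proj_pt_in_plane_of_iff)
qed

lemma plane_of_in_planes: "h \<noteq> zero4 \<Longrightarrow> plane_of h \<in> planes"
  unfolding planes_def by blast

section \<open>The twisted cubic and its osculating planes\<close>

lemma cubic_pt_inj: "inj cubic_pt"
  unfolding cubic_pt_def by (auto intro!: injI dest!: proj_pt_eqD)

lemma cubic_pt_ne_cubic_inf [simp]: "cubic_pt t \<noteq> cubic_inf"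
  unfolding cubic_pt_def cubic_inf_def by (auto dest!: proj_pt_eqD)

lemma proj_pt_in_osc_plane_iff:
  "proj_pt (y0, y1, y2, y3) \<in> osc_plane t
    \<longleftrightarrow> (y0, y1, y2, y3) \<noteq> zero4 \<and> - (t^3) * y0 + 3 * t^2 * y1 - 3 * t * y2 + y3 = 0"
  unfolding osc_plane_def proj_pt_in_plane_of_iff by (simp add: algebra_simps)

lemma proj_pt_in_osc_inf_iff: "proj_pt (y0, y1, y2, y3) \<in> osc_inf \<longleftrightarrow> (y0, y1, y2, y3) \<noteq> zero4 \<and> y0 = 0"
  unfolding osc_inf_def proj_pt_in_plane_of_iff by simp

lemma cubic_pt_in_osc_plane_iff: "cubic_pt s \<in> osc_plane t \<longleftrightarrow> s = t"
proof -
  have "- (t^3) * 1 + 3 * t^2 * s - 3 * t * s^2 + s^3 = (s - t)^3" by algebra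
  then show ?thesis unfolding cubic_pt_def proj_pt_in_osc_plane_iff by (simp add: zero4_def)
qed

lemma cubic_inf_notin_osc_plane [simp]: "cubic_inf \<notin> osc_plane t"
  unfolding cubic_inf_def proj_pt_in_osc_plane_iff by simp

lemma cubic_inf_in_osc_inf [simp]: "cubic_inf \<in> osc_inf"
  unfolding cubic_inf_def proj_pt_in_osc_inf_iff by (simp add: zero4_def)

lemma osc_plane_inj: "inj osc_plane"
  by (rule injI) (metis cubic_pt_in_osc_plane_iff)

lemma osc_plane_ne_osc_inf [simp]: "osc_plane t \<noteq> osc_inf"
  using cubic_inf_notin_osc_plane cubic_inf_in_osc_inf by metis

lemma osc_inf_in_Osc: "osc_inf \<in> Osc"
  unfolding Osc_def by blast

lemma Osc_subset_planes: "Osc \<subseteq> planes"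
  unfolding Osc_def osc_plane_def osc_inf_def by (auto intro!: plane_of_in_planes simp: zero4_def)

lemma cubic_pt_notin_osc_inf [simp]: "cubic_pt t \<notin> osc_inf"
  unfolding cubic_pt_def proj_pt_in_osc_inf_iff by simp

lemma cubic_inf_in_TC: "cubic_inf \<in> TC"
  unfolding TC_def by blast

definition tan_line :: "'a::field \<Rightarrow> 'a vec4 set set" where
  "tan_line t = line_of (1, t, t^2, t^3) (0, 1, 2 * t, 3 * t^2)"

definition tan_inf :: "'a::field vec4 set set" where
  "tan_inf = line_of (0, 0, 0, 1) (0, 0, 1, 0)"

lemma Tan_eq: "Tan = range tan_line \<union> {tan_inf}"
  unfolding Tan_def tan_line_def tan_inf_def ..

lemma card_Osc_through:
  fixes P :: "'a::{field,finite} vec4 set"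
  shows "card {\<pi> \<in> Osc. P \<in> \<pi>} = (if P \<in> osc_inf then 1 else 0) + card {t. P \<in> osc_plane t}"
proof -
  have split: "{\<pi> \<in> Osc. P \<in> \<pi>}
      = (if P \<in> osc_inf then {osc_inf} else {}) \<union> osc_plane ` {t. P \<in> osc_plane t}"
    unfolding Osc_def by auto
  have "card (osc_plane ` {t. P \<in> osc_plane t}) = card {t. P \<in> osc_plane t}"
    by (rule card_image, rule inj_on_subset[OF osc_plane_inj subset_UNIV])
  moreover have "osc_inf \<notin> osc_plane ` {t. P \<in> osc_plane t}"
    using osc_plane_ne_osc_inf by (metis imageE)
  ultimately show ?thesis unfolding split by (simp add: card_insert_if)
qed

lemma card_Int_TC:
  fixes \<pi> :: "'a::{field,finite} vec4 set set"
  shows "card (\<pi> \<inter> TC) = (if cubic_inf \<in> \<pi> then 1 else 0) + card {t. cubic_pt t \<in> \<pi>}"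
proof -
  have split: "\<pi> \<inter> TC = (if cubic_inf \<in> \<pi> then {cubic_inf} else {}) \<union> cubic_pt ` {t. cubic_pt t \<in> \<pi>}"
    unfolding TC_def by auto
  have "card (cubic_pt ` {t. cubic_pt t \<in> \<pi>}) = card {t. cubic_pt t \<in> \<pi>}"
    by (rule card_image, rule inj_on_subset[OF cubic_pt_inj subset_UNIV])
  moreover have "cubic_inf \<notin> cubic_pt ` {t. cubic_pt t \<in> \<pi>}"
    using cubic_pt_ne_cubic_inf by (metis imageE)
  ultimately show ?thesis unfolding split by (simp add: card_insert_if)
qed

section \<open>Squares and quadratic equations in a field\<close>

definition nonzero_square :: "'a::field \<Rightarrow> bool" where
  "nonzero_square y \<longleftrightarrow> y \<noteq> 0 \<and> (\<exists>x. y = x^2)"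

definition nonsquare :: "'a::field \<Rightarrow> bool" where
  "nonsquare y \<longleftrightarrow> \<not> (\<exists>x. y = x^2)"

lemma nonsquare_iff: "nonsquare y \<longleftrightarrow> y \<noteq> 0 \<and> \<not> nonzero_square y"
  unfolding nonsquare_def nonzero_square_def by (metis power_zero_numeral)

lemma power2_eq_power2_iff_field:
  fixes x y :: "'a::field"
  shows "y^2 = x^2 \<longleftrightarrow> y = x \<or> y = - x"
proof -
  have "y^2 - x^2 = (y - x) * (y + x)" by algebra
  then have "y^2 = x^2 \<longleftrightarrow> (y - x) * (y + x) = 0" by (metis eq_iff_diff_eq_0)
  then show ?thesis by (auto simp: add_eq_0_iff2)
qed

lemma card_sqrt:
  fixes D :: "'a::field"
  assumes two: "(2::'a) \<noteq> 0"
  shows "card {y. y^2 = D} = (if D = 0 then 1 else if nonzero_square D then 2 else 0)"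
proof (cases "nonzero_square D")
  case True
  then obtain x where x: "D = x^2" "x \<noteq> 0" unfolding nonzero_square_def by auto
  then have "{y. y^2 = D} = {x, - x}" using power2_eq_power2_iff_field by auto
  moreover have "x \<noteq> - x"
    using two x(2) by (metis add_eq_0_iff2 mult_2 mult_eq_0_iff)
  ultimately show ?thesis using True x by simp
next
  case False
  then have "{y. y^2 = D} = (if D = 0 then {0} else {})"
    unfolding nonzero_square_def by auto
  then show ?thesis using False by simp
qed

lemma card_nonzero_squares_double:
  assumes two: "(2::'a::{field,finite}) \<noteq> 0"
  shows "2 * card {y::'a. nonzero_square y} = card (UNIV :: 'a set) - 1"
proof -
  let ?S = "{y::'a. nonzero_square y}"
  have "UNIV - {0::'a} = (\<Union>y\<in>?S. {x. x^2 = y})"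
    unfolding nonzero_square_def by auto
  moreover have "card (\<Union>y\<in>?S. {x. x^2 = y}) = (\<Sum>y\<in>?S. card {x. x^2 = y})"
    by (rule card_UN_disjoint) auto
  moreover have "(\<Sum>y\<in>?S. card {x. x^2 = y}) = (\<Sum>y\<in>?S. 2)"
    using card_sqrt[OF two] by (intro sum.cong) (auto simp: nonzero_square_def)
  moreover have "card (UNIV - {0::'a}) = card (UNIV :: 'a set) - 1"
    by (simp add: card_Diff_singleton)
  ultimately show ?thesis by simp
qed

lemma card_nonzero_squares:
  assumes two: "(2::'a::{field,finite}) \<noteq> 0"
  shows "card {y::'a. nonzero_square y} = (card (UNIV :: 'a set) - 1) div 2"
  using card_nonzero_squares_double[OF two] by simp

lemma card_nonsquares:
  assumes two: "(2::'a::{field,finite}) \<noteq> 0"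
  shows "card {y::'a. nonsquare y} = (card (UNIV :: 'a set) - 1) div 2"
proof -
  let ?Q = "{y::'a. nonzero_square y}" and ?N = "{y::'a. nonsquare y}"
  have "(UNIV::'a set) = insert 0 (?Q \<union> ?N)" "0 \<notin> ?Q \<union> ?N" "?Q \<inter> ?N = {}"
    by (auto simp: nonsquare_iff nonzero_square_def)
  then have "card (UNIV :: 'a set) = 1 + card ?Q + card ?N"
    by (metis card_Un_disjoint card_insert_disjoint finite plus_1_eq_Suc add.assoc)
  then show ?thesis using card_nonzero_squares_double[OF two] by simp
qed

lemma card_affine_substitution:
  fixes a c :: "'a::field"
  assumes c: "c \<noteq> 0"
  shows "card {x. P (a + c * x)} = card {y. P y}"
proof (rule bij_betw_same_card)
  show "bij_betw (\<lambda>x. a + c * x) {x. P (a + c * x)} {y. P y}"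
    by (rule bij_betw_byWitness[where f' = "\<lambda>y. (y - a) / c"]) (use c in auto)
qed

lemma card_quadratic_roots:
  fixes a b c :: "'a::field"
  assumes two: "(2::'a) \<noteq> 0" and a: "a \<noteq> 0"
  shows "card {u. a * u^2 + b * u + c = 0} = card {y. y^2 = b^2 - 4 * a * c}"
proof -
  have four_a: "4 * a \<noteq> 0"
    using two a by (metis mult_eq_0_iff mult_2_right numeral_Bit0 one_add_one)
  have "a * u^2 + b * u + c = 0 \<longleftrightarrow> (b + (2 * a) * u)^2 = b^2 - 4 * a * c" for u
  proof -
    have "(b + (2 * a) * u)^2 - (b^2 - 4 * a * c) = (4 * a) * (a * u^2 + b * u + c)"
      by algebra
    then show ?thesis using four_a by (metis eq_iff_diff_eq_0 mult_eq_0_iff)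
  qed
  then have "{u. a * u^2 + b * u + c = 0} = {u. (b + (2 * a) * u)^2 = b^2 - 4 * a * c}"
    by simp
  also have "card \<dots> = card {y. y^2 = b^2 - 4 * a * c}"
    by (rule card_affine_substitution) (use two a in simp)
  finally show ?thesis .
qed

section \<open>Collineations preserving the twisted cubic\<close>

definition linear4 :: "('a::field vec4 \<Rightarrow> 'a vec4) \<Rightarrow> bool" where
  "linear4 \<phi> \<longleftrightarrow> (\<forall>c v. \<phi> (sm c v) = sm c (\<phi> v)) \<and> (\<forall>u v. \<phi> (vadd u v) = vadd (\<phi> u) (\<phi> v))"

definition act_pt :: "('a::field vec4 \<Rightarrow> 'a vec4) \<Rightarrow> 'a vec4 set \<Rightarrow> 'a vec4 set" where
  "act_pt \<phi> P = \<phi> ` P"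

definition act :: "('a::field vec4 \<Rightarrow> 'a vec4) \<Rightarrow> 'a vec4 set set \<Rightarrow> 'a vec4 set set" where
  "act \<phi> X = act_pt \<phi> ` X"

lemma act_act: "act \<phi> (act \<psi> X) = act (\<lambda>v. \<phi> (\<psi> v)) X"
  unfolding act_def act_pt_def by (simp add: image_image)

lemma linear4_sm: "linear4 \<phi> \<Longrightarrow> \<phi> (sm c v) = sm c (\<phi> v)"
  unfolding linear4_def by blast

lemma linear4_vadd: "linear4 \<phi> \<Longrightarrow> \<phi> (vadd u v) = vadd (\<phi> u) (\<phi> v)"
  unfolding linear4_def by blast

lemma linear4_zero4: "linear4 \<phi> \<Longrightarrow> \<phi> zero4 = zero4"
  using linear4_sm[of \<phi> 0 zero4] by simp

lemma linear4_inverse: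
  assumes "linear4 \<phi>" "\<And>v. \<psi> (\<phi> v) = v" "\<And>v. \<phi> (\<psi> v) = v"
  shows "linear4 \<psi>"
  unfolding linear4_def
proof (intro conjI allI)
  fix c v
  have "\<psi> (sm c v) = \<psi> (\<phi> (sm c (\<psi> v)))" using assms by (simp add: linear4_sm)
  then show "\<psi> (sm c v) = sm c (\<psi> v)" using assms by simp
next
  fix u v
  have "\<psi> (vadd u v) = \<psi> (\<phi> (vadd (\<psi> u) (\<psi> v)))" using assms by (simp add: linear4_vadd)
  then show "\<psi> (vadd u v) = vadd (\<psi> u) (\<psi> v)" using assms by simp
qed

lemma act_pt_proj_pt:
  assumes "linear4 \<phi>"
  shows "act_pt \<phi> (proj_pt v) = proj_pt (\<phi> v)"
proof -
  have proj_pt_image: "proj_pt w = (\<lambda>c. sm c w) ` {c. c \<noteq> 0}" for w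
    unfolding proj_pt_def by auto
  show ?thesis
    unfolding act_pt_def proj_pt_image image_image using assms by (simp add: linear4_sm)
qed

lemma line_of_eq_image:
  "line_of u w = (\<lambda>(a, b). proj_pt (vadd (sm a u) (sm b w))) ` {(a, b). a \<noteq> 0 \<or> b \<noteq> 0}"
  unfolding line_of_def by auto

lemma act_line_of: "linear4 \<phi> \<Longrightarrow> act \<phi> (line_of u w) = line_of (\<phi> u) (\<phi> w)"
  unfolding act_def line_of_eq_image[of u] line_of_eq_image[of "\<phi> u"] image_image
  by (intro image_cong refl) (auto simp: act_pt_proj_pt linear4_sm linear4_vadd)

lemma dot_linear4:
  assumes "linear4 \<psi>"
  shows "dot h (\<psi> y) = dot (dot h (\<psi> (1,0,0,0)), dot h (\<psi> (0,1,0,0)), dot h (\<psi> (0,0,1,0)), dot h (\<psi> (0,0,0,1))) y"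
proof -
  obtain y0 y1 y2 y3 where y: "y = (y0, y1, y2, y3)" by (cases y rule: prod_cases4)
  have "y = vadd (sm y0 (1,0,0,0)) (vadd (sm y1 (0,1,0,0)) (vadd (sm y2 (0,0,1,0)) (sm y3 (0,0,0,1))))"
    unfolding y by simp
  then have "\<psi> y = vadd (sm y0 (\<psi> (1,0,0,0))) (vadd (sm y1 (\<psi> (0,1,0,0)))
                (vadd (sm y2 (\<psi> (0,0,1,0))) (sm y3 (\<psi> (0,0,0,1)))))"
    using assms by (simp only: linear4_sm linear4_vadd)
  then show ?thesis unfolding y by (simp add: algebra_simps del: dot.simps) (simp add: algebra_simps)
qed

lemma act_plane_of:
  assumes lin: "linear4 \<phi>" "linear4 \<psi>"
    and inv: "\<And>v. \<psi> (\<phi> v) = v" "\<And>v. \<phi> (\<psi> v) = v"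
    and h': "\<And>y. dot h (\<psi> y) = 0 \<longleftrightarrow> dot h' y = 0"
  shows "act \<phi> (plane_of h) = plane_of h'"
proof (intro set_eqI iffI)
  have nonzero: "\<phi> v \<noteq> zero4" "\<psi> v \<noteq> zero4" if "v \<noteq> zero4" for v
    using that inv lin linear4_zero4 by metis+
  fix Q
  show "Q \<in> plane_of h'" if Q: "Q \<in> act \<phi> (plane_of h)"
  proof -
    obtain P where "Q = act_pt \<phi> P" "P \<in> plane_of h"
      using Q unfolding act_def by blast
    then obtain v where "Q = act_pt \<phi> (proj_pt v)" "v \<noteq> zero4" "dot h v = 0"
      by (auto elim: plane_ofE)
    then show ?thesis
      using h'[of "\<phi> v"] nonzero lin inv by (simp add: act_pt_proj_pt proj_pt_in_plane_of_iff)
  qed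
  show "Q \<in> act \<phi> (plane_of h)" if Q: "Q \<in> plane_of h'"
  proof -
    obtain y where y: "Q = proj_pt y" "y \<noteq> zero4" "dot h' y = 0"
      using Q by (rule plane_ofE)
    then have "proj_pt (\<psi> y) \<in> plane_of h" "act_pt \<phi> (proj_pt (\<psi> y)) = Q"
      using h' nonzero lin inv by (simp_all add: proj_pt_in_plane_of_iff act_pt_proj_pt)
    then show ?thesis unfolding act_def by blast
  qed
qed

lemma image_invariant_iff:
  assumes "f ` K = K" "inj f"
  shows "f x \<in> K \<longleftrightarrow> x \<in> K"
proof -
  have "f x \<in> f ` K \<longleftrightarrow> x \<in> K" by (rule inj_image_mem_iff[OF assms(2)])
  then show ?thesis using assms(1) by simp
qed

locale cubic_collineation =
  fixes \<phi> \<psi> :: "'a::field vec4 \<Rightarrow> 'a vec4"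
  assumes linear: "linear4 \<phi>"
    and inverse_left [simp]: "\<And>v. \<psi> (\<phi> v) = v"
    and inverse_right [simp]: "\<And>v. \<phi> (\<psi> v) = v"
    and TC_image: "act_pt \<phi> ` TC = TC"
    and Osc_image: "act \<phi> ` Osc = Osc"
    and Tan_image: "act \<phi> ` Tan = Tan"
begin

lemma linear_inverse: "linear4 \<psi>"
  by (rule linear4_inverse[OF linear inverse_left inverse_right])

lemma act_pt_inverse [simp]: "act_pt \<psi> (act_pt \<phi> P) = P" "act_pt \<phi> (act_pt \<psi> P) = P"
  unfolding act_pt_def by (simp_all add: image_image)

lemma act_inverse [simp]: "act \<psi> (act \<phi> X) = X" "act \<phi> (act \<psi> X) = X"
  unfolding act_def by (simp_all add: image_image)

lemma inj_act_pt: "inj (act_pt \<phi>)"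
  by (metis injI act_pt_inverse(1))

lemma inj_act: "inj (act \<phi>)"
  by (metis injI act_inverse(1))

lemma act_pt_in_act_iff [simp]: "act_pt \<phi> P \<in> act \<phi> X \<longleftrightarrow> P \<in> X"
  unfolding act_def by (simp add: inj_image_mem_iff inj_act_pt)

lemma act_subset_act_iff [simp]: "act \<phi> X \<subseteq> act \<phi> Y \<longleftrightarrow> X \<subseteq> Y"
  unfolding act_def by (simp add: inj_image_subset_iff inj_act_pt)

lemma act_pt_in_TC_iff [simp]: "act_pt \<phi> P \<in> TC \<longleftrightarrow> P \<in> TC"
  by (rule image_invariant_iff[OF TC_image inj_act_pt])

lemma act_in_Osc_iff [simp]: "act \<phi> X \<in> Osc \<longleftrightarrow> X \<in> Osc"
  by (rule image_invariant_iff[OF Osc_image inj_act])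

lemma act_in_Tan_iff [simp]: "act \<phi> X \<in> Tan \<longleftrightarrow> X \<in> Tan"
  by (rule image_invariant_iff[OF Tan_image inj_act])

end

lemma image_eq_if_inverse_maps_into:
  assumes "f ` A \<subseteq> A" "g ` A \<subseteq> A" "\<And>x. f (g x) = x"
  shows "f ` A = A"
proof
  show "A \<subseteq> f ` A"
  proof
    fix x assume "x \<in> A"
    then have "g x \<in> A" using assms(2) by blast
    then show "x \<in> f ` A" using assms(3) by (metis image_eqI)
  qed
qed (rule assms(1))

lemma cubic_collineationI:
  assumes "linear4 \<phi>" "\<And>v. \<psi> (\<phi> v) = v" "\<And>v. \<phi> (\<psi> v) = v"
    and "act_pt \<phi> ` TC \<subseteq> TC" "act_pt \<psi> ` TC \<subseteq> TC"
    and "act \<phi> ` Osc \<subseteq> Osc" "act \<psi> ` Osc \<subseteq> Osc"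
    and "act \<phi> ` Tan \<subseteq> Tan" "act \<psi> ` Tan \<subseteq> Tan"
  shows "cubic_collineation \<phi> \<psi>"
proof
  have inv_pt: "act_pt \<phi> (act_pt \<psi> P) = P" for P
    unfolding act_pt_def by (simp add: image_image assms(3))
  then have inv: "act \<phi> (act \<psi> X) = X" for X
    unfolding act_def by (simp add: image_image)
  show "act_pt \<phi> ` TC = TC"
    by (rule image_eq_if_inverse_maps_into[OF assms(4,5) inv_pt])
  show "act \<phi> ` Osc = Osc"
    by (rule image_eq_if_inverse_maps_into[OF assms(6,7) inv])
  show "act \<phi> ` Tan = Tan"
    by (rule image_eq_if_inverse_maps_into[OF assms(8,9) inv])
qed (fact assms)+

lemma act_pt_in_points:
  assumes "linear4 \<phi>" "\<And>v. \<psi> (\<phi> v) = v" "P \<in> points"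
  shows "act_pt \<phi> P \<in> points"
proof -
  obtain v where v: "P = proj_pt v" "v \<noteq> zero4"
    using assms(3) unfolding points_def by blast
  then have "\<phi> v \<noteq> zero4"
    using assms(2) linear4_zero4[OF assms(1)] by metis
  then show ?thesis
    using v assms(1) by (simp add: act_pt_proj_pt proj_pt_in_points)
qed

lemma indep_linear4:
  assumes "linear4 \<phi>" "\<And>v. \<psi> (\<phi> v) = v" "indep u w"
  shows "indep (\<phi> u) (\<phi> w)"
  unfolding indep_def
proof (intro allI impI)
  fix a b assume "vadd (sm a (\<phi> u)) (sm b (\<phi> w)) = zero4"
  then have "\<phi> (vadd (sm a u) (sm b w)) = \<phi> zero4"
    using assms(1) by (simp add: linear4_sm linear4_vadd linear4_zero4)
  then have "vadd (sm a u) (sm b w) = zero4"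
    using assms(2) by metis
  then show "a = 0 \<and> b = 0" using assms(3) unfolding indep_def by blast
qed

lemma act_plane_of_in_planes:
  assumes lin: "linear4 \<phi>" "linear4 \<psi>"
    and inv: "\<And>v. \<psi> (\<phi> v) = v" "\<And>v. \<phi> (\<psi> v) = v"
    and h: "h \<noteq> zero4"
  shows "act \<phi> (plane_of h) \<in> planes"
proof -
  define h' where "h' = (dot h (\<psi> (1,0,0,0)), dot h (\<psi> (0,1,0,0)), dot h (\<psi> (0,0,1,0)), dot h (\<psi> (0,0,0,1)))"
  have pullback: "dot h (\<psi> y) = dot h' y" for y
    unfolding h'_def by (rule dot_linear4[OF lin(2)])
  have "h' \<noteq> zero4"
  proof
    assume "h' = zero4"
    then have "dot h (\<psi> y) = 0" for y
      unfolding pullback by (cases y rule: prod_cases4) (simp add: zero4_def)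
    then have "dot h v = 0" for v
      using inv(1) by metis
    then have "dot h (1,0,0,0) = 0" "dot h (0,1,0,0) = 0" "dot h (0,0,1,0) = 0" "dot h (0,0,0,1) = 0"
      by blast+
    then show False using h by (cases h rule: prod_cases4) (simp add: zero4_def)
  qed
  moreover have "act \<phi> (plane_of h) = plane_of h'"
    by (rule act_plane_of[OF lin inv]) (simp add: pullback)
  ultimately show ?thesis by (simp add: plane_of_in_planes)
qed

context cubic_collineation
begin

lemma act_pt_in_points_iff [simp]: "act_pt \<phi> P \<in> points \<longleftrightarrow> P \<in> points"
  using act_pt_in_points[OF linear inverse_left] act_pt_in_points[OF linear_inverse inverse_right]
  by (metis act_pt_inverse(1))

lemma act_in_planes_iff [simp]: "act \<phi> \<pi> \<in> planes \<longleftrightarrow> \<pi> \<in> planes"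
proof -
  have "act f \<pi> \<in> planes" if "\<pi> \<in> planes" "linear4 f" "linear4 g"
    "\<And>v. g (f v) = v" "\<And>v. f (g v) = v" for f g \<pi>
    using that act_plane_of_in_planes unfolding planes_def by blast
  from this[of \<pi> \<phi> \<psi>] this[of "act \<phi> \<pi>" \<psi> \<phi>] show ?thesis
    using linear linear_inverse by auto
qed

lemma act_in_lines: "l \<in> lines \<Longrightarrow> act \<phi> l \<in> lines"
  unfolding lines_def
  using act_line_of[OF linear] indep_linear4[OF linear inverse_left] by blast

lemma Collect_act_eq_image:
  assumes K: "\<And>X. act \<phi> X \<in> K \<longleftrightarrow> X \<in> K" and R: "\<And>X. R (act \<phi> X) \<longleftrightarrow> R' X"
  shows "{X \<in> K. R X} = act \<phi> ` {X \<in> K. R' X}"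
proof (intro set_eqI iffI)
  fix X assume "X \<in> {X \<in> K. R X}"
  then have "act \<psi> X \<in> {X \<in> K. R' X}"
    using K[of "act \<psi> X"] R[of "act \<psi> X"] by simp
  moreover have "X = act \<phi> (act \<psi> X)" by simp
  ultimately show "X \<in> act \<phi> ` {X \<in> K. R' X}"
    by (rule rev_image_eqI)
next
  fix X assume "X \<in> act \<phi> ` {X \<in> K. R' X}"
  then obtain Y where "X = act \<phi> Y" "Y \<in> K" "R' Y" by blast
  then show "X \<in> {X \<in> K. R X}" using K R by simp
qed

lemma card_Collect_act:
  assumes "\<And>X. act \<phi> X \<in> K \<longleftrightarrow> X \<in> K" "\<And>X. R (act \<phi> X) \<longleftrightarrow> R' X"
  shows "card {X \<in> K. R X} = card {X \<in> K. R' X}"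
  unfolding Collect_act_eq_image[of K R R', OF assms]
  by (rule card_image, rule inj_on_subset[OF inj_act subset_UNIV])

lemma act_Int:
  assumes "\<And>P. act_pt \<phi> P \<in> K \<longleftrightarrow> P \<in> K"
  shows "act \<phi> X \<inter> K = act_pt \<phi> ` (X \<inter> K)"
proof (intro set_eqI iffI)
  fix P assume "P \<in> act \<phi> X \<inter> K"
  then obtain Q where "P = act_pt \<phi> Q" "Q \<in> X" "act_pt \<phi> Q \<in> K"
    unfolding act_def by blast
  then show "P \<in> act_pt \<phi> ` (X \<inter> K)" using assms by blast
qed (use assms in \<open>auto simp: act_def\<close>)

lemma card_act_Int:
  assumes "\<And>P. act_pt \<phi> P \<in> K \<longleftrightarrow> P \<in> K"
  shows "card (act \<phi> X \<inter> K) = card (X \<inter> K)"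
  unfolding act_Int[OF assms]
  by (rule card_image, rule inj_on_subset[OF inj_act_pt subset_UNIV])

lemma act_pt_in_point_class_iff:
  assumes "K \<in> set [P1, P2, P3, P4, P5]"
  shows "act_pt \<phi> P \<in> K \<longleftrightarrow> P \<in> K"
proof -
  have "{l \<in> Tan. act_pt \<phi> P \<in> l} = act \<phi> ` {l \<in> Tan. P \<in> l}"
    by (rule Collect_act_eq_image) simp_all
  then have tangent: "(\<exists>l\<in>Tan. act_pt \<phi> P \<in> l) \<longleftrightarrow> (\<exists>l\<in>Tan. P \<in> l)"
    by blast
  have "{\<pi> \<in> Osc. act_pt \<phi> P \<in> \<pi>} = act \<phi> ` {\<pi> \<in> Osc. P \<in> \<pi>}"
    by (rule Collect_act_eq_image) simp_all
  then have no_osculating: "(\<forall>\<pi>\<in>Osc. act_pt \<phi> P \<notin> \<pi>) \<longleftrightarrow> (\<forall>\<pi>\<in>Osc. P \<notin> \<pi>)"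
    by blast
  have osculating: "card {\<pi> \<in> Osc. act_pt \<phi> P \<in> \<pi>} = card {\<pi> \<in> Osc. P \<in> \<pi>}"
    by (rule card_Collect_act) simp_all
  from assms consider "K = P1" | "K = P2" | "K = P3" | "K = P4" | "K = P5" by auto
  then show ?thesis
    by cases (simp_all add: P1_def P2_def P3_def P4_def P5_def tangent no_osculating osculating)
qed

lemma act_in_plane_class_iff:
  assumes "K \<in> set [H1, H2, H3, H4, H5]"
  shows "act \<phi> \<pi> \<in> K \<longleftrightarrow> \<pi> \<in> K"
proof -
  have card_TC: "card (act \<phi> \<pi> \<inter> TC) = card (\<pi> \<inter> TC)"
    by (rule card_act_Int) simp
  have "act \<phi> \<pi> \<inter> TC = act_pt \<phi> ` (\<pi> \<inter> TC)"
    by (rule act_Int) simp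
  then have disjoint_TC: "act \<phi> \<pi> \<inter> TC = {} \<longleftrightarrow> \<pi> \<inter> TC = {}"
    by simp
  from assms consider "K = H1" | "K = H2" | "K = H3" | "K = H4" | "K = H5" by auto
  then show ?thesis
    by cases (simp_all add: H1_def H2_def H3_def H4_def H5_def card_TC disjoint_TC)
qed

lemma OD0_act: "OD0 (act \<phi> l) = OD0 l"
proof -
  have "card (act \<phi> l \<inter> K) = card (l \<inter> K)" if "K \<in> set [P1, P2, P3, P4, P5]" for K
    by (rule card_act_Int) (rule act_pt_in_point_class_iff[OF that])
  then show ?thesis unfolding OD0_def by (rule map_cong[OF refl])
qed

lemma OD2_act: "OD2 (act \<phi> l) = OD2 l"
proof -
  have "card {\<pi> \<in> K. act \<phi> l \<subseteq> \<pi>} = card {\<pi> \<in> K. l \<subseteq> \<pi>}"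
    if "K \<in> set [H1, H2, H3, H4, H5]" for K
    by (rule card_Collect_act) (simp_all add: act_in_plane_class_iff[OF that])
  then show ?thesis unfolding OD2_def by (rule map_cong[OF refl])
qed

lemma act_in_L3:
  assumes "l \<in> L3"
  shows "act \<phi> l \<in> L3"
proof -
  obtain \<pi> where "\<pi> \<in> Osc" "l \<subseteq> \<pi>" "l \<in> lines" "l \<notin> Tan" "card (l \<inter> TC) = 1"
    using assms unfolding L3_def by blast
  moreover have "card (act \<phi> l \<inter> TC) = card (l \<inter> TC)"
    by (rule card_act_Int) simp
  ultimately have "act \<phi> \<pi> \<in> Osc" "act \<phi> l \<subseteq> act \<phi> \<pi>" "act \<phi> l \<in> lines"
    "act \<phi> l \<notin> Tan" "card (act \<phi> l \<inter> TC) = 1"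
    by (simp_all add: act_in_lines)
  then show ?thesis unfolding L3_def by blast
qed

end

section \<open>The group G\<close>

lemma gact_linear4: "linear4 (gact a b c d)"
  unfolding linear4_def
proof (intro conjI allI)
  fix c' v show "gact a b c d (sm c' v) = sm c' (gact a b c d v)"
    by (cases v rule: prod_cases4) (simp add: algebra_simps)
next
  fix u v show "gact a b c d (vadd u v) = vadd (gact a b c d u) (gact a b c d v)"
    by (cases v rule: prod_cases4; cases u rule: prod_cases4) (simp add: algebra_simps)
qed

lemma gact_gact:
  "gact a b c d (gact a' b' c' d' v) = gact (a' * a + b' * c) (a' * b + b' * d) (c' * a + d' * c) (c' * b + d' * d) v"
  by (cases v rule: prod_cases4) (simp add: algebra_simps power2_eq_square power3_eq_cube)

lemma gact_id [simp]: "gact 1 0 0 1 v = v"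
  by (cases v rule: prod_cases4) simp

abbreviation shift :: "'a::field \<Rightarrow> 'a vec4 \<Rightarrow> 'a vec4" where
  "shift s \<equiv> gact 1 s 0 1"

lemma shift_apply:
  "shift s (y0, y1, y2, y3) = (y0, y0 * s + y1, y0 * s^2 + 2 * s * y1 + y2, y0 * s^3 + 3 * s^2 * y1 + 3 * s * y2 + y3)"
  by (simp add: algebra_simps)

lemma shift_shift_neg [simp]: "shift (- s) (shift s v) = v" "shift s (shift (- s) v) = v"
  by (simp_all add: gact_gact)

lemma shift_moment_curve: "shift s (1, t, t^2, t^3) = (1, t + s, (t + s)^2, (t + s)^3)"
  unfolding shift_apply by (simp add: power2_eq_square power3_eq_cube algebra_simps)

lemma act_pt_shift_cubic_pt: "act_pt (shift s) (cubic_pt t) = cubic_pt (t + s)"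
  unfolding cubic_pt_def act_pt_proj_pt[OF gact_linear4] shift_moment_curve ..

lemma act_pt_shift_cubic_inf: "act_pt (shift s) cubic_inf = cubic_inf"
  unfolding cubic_inf_def by (simp add: act_pt_proj_pt gact_linear4)

lemma act_shift_osc_plane: "act (shift s) (osc_plane t) = osc_plane (t + s)"
  unfolding osc_plane_def
proof (rule act_plane_of[OF gact_linear4 gact_linear4 shift_shift_neg])
  fix y :: "'a vec4"
  obtain y0 y1 y2 y3 where y: "y = (y0, y1, y2, y3)" by (cases y rule: prod_cases4)
  have "dot (- (t^3), 3 * t^2, - 3 * t, 1) (shift (- s) y)
      = dot (- ((t + s)^3), 3 * (t + s)^2, - 3 * (t + s), 1) y"
    unfolding y shift_apply by (simp add: power2_eq_square power3_eq_cube algebra_simps)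
  then show "dot (- (t^3), 3 * t^2, - 3 * t, 1) (shift (- s) y) = 0
      \<longleftrightarrow> dot (- ((t + s)^3), 3 * (t + s)^2, - 3 * (t + s), 1) y = 0"
    by simp
qed

lemma act_shift_osc_inf: "act (shift s) osc_inf = osc_inf"
  unfolding osc_inf_def
proof (rule act_plane_of[OF gact_linear4 gact_linear4 shift_shift_neg])
  fix y :: "'a vec4"
  show "dot (1, 0, 0, 0) (shift (- s) y) = 0 \<longleftrightarrow> dot (1, 0, 0, 0) y = 0"
    by (cases y rule: prod_cases4) simp
qed

lemma act_shift_tan_line: "act (shift s) (tan_line t) = tan_line (t + s)"
proof -
  have "shift s (0, 1, 2 * t, 3 * t^2) = (0, 1, 2 * (t + s), 3 * (t + s)^2)"
    unfolding shift_apply by (simp add: power2_eq_square algebra_simps)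
  then show ?thesis
    unfolding tan_line_def act_line_of[OF gact_linear4] shift_moment_curve by (simp only:)
qed

lemma act_shift_tan_inf: "act (shift s) tan_inf = tan_inf"
proof -
  have "act (shift s) tan_inf = line_of (0, 0, 0, 1) (0, 0, 1, 3 * s)"
    unfolding tan_inf_def by (simp add: act_line_of gact_linear4)
  also have "\<dots> = tan_inf"
    unfolding tan_inf_def by (rule line_of_change_basis[of _ 1 _ 0 _ _ "3 * s" 1]) simp_all
  finally show ?thesis .
qed

lemma cubic_collineation_shift: "cubic_collineation (shift s) (shift (- s))"
proof (rule cubic_collineationI[OF gact_linear4 shift_shift_neg])
  have TC: "act_pt (shift r) ` TC \<subseteq> TC" for r
    unfolding TC_def image_Un image_insert image_empty image_image
    by (simp add: act_pt_shift_cubic_pt act_pt_shift_cubic_inf image_subset_iff)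
  have Osc: "act (shift r) ` Osc \<subseteq> Osc" for r
    unfolding Osc_def image_Un image_insert image_empty image_image
    by (simp add: act_shift_osc_plane act_shift_osc_inf image_subset_iff)
  have Tan: "act (shift r) ` Tan \<subseteq> Tan" for r
    unfolding Tan_eq image_Un image_insert image_empty image_image
    by (simp add: act_shift_tan_line act_shift_tan_inf image_subset_iff)
  show "act_pt (shift s) ` TC \<subseteq> TC" "act_pt (shift (- s)) ` TC \<subseteq> TC"
    "act (shift s) ` Osc \<subseteq> Osc" "act (shift (- s)) ` Osc \<subseteq> Osc"
    "act (shift s) ` Tan \<subseteq> Tan" "act (shift (- s)) ` Tan \<subseteq> Tan"
    by (rule TC Osc Tan)+
qed

abbreviation swap :: "'a::field vec4 \<Rightarrow> 'a vec4" where
  "swap \<equiv> gact 0 1 1 0"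

lemma swap_apply [simp]: "swap (y0, y1, y2, y3) = (y3, y2, y1, y0)"
  by simp

lemma swap_swap [simp]: "swap (swap v) = v"
  by (cases v rule: prod_cases4) simp

lemma act_pt_swap_cubic_pt: "act_pt swap (cubic_pt t) = (if t = 0 then cubic_inf else cubic_pt (1 / t))"
proof (cases "t = 0")
  case True
  then show ?thesis unfolding cubic_pt_def cubic_inf_def by (simp add: act_pt_proj_pt gact_linear4)
next
  case False
  have "swap (1, t, t^2, t^3) = sm (t^3) (1, 1 / t, (1 / t)^2, (1 / t)^3)"
    using False by (simp add: power2_eq_square power3_eq_cube field_simps)
  then show ?thesis
    unfolding cubic_pt_def act_pt_proj_pt[OF gact_linear4]
    using False proj_pt_sm[of "t^3" "(1, 1 / t, (1 / t)^2, (1 / t)^3)"] by (simp del: sm.simps swap_apply)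
qed

lemma act_pt_swap_cubic_inf: "act_pt swap cubic_inf = cubic_pt 0"
  unfolding cubic_inf_def cubic_pt_def by (simp add: act_pt_proj_pt gact_linear4)

lemma act_swap_osc_plane: "act swap (osc_plane t) = (if t = 0 then osc_inf else osc_plane (1 / t))"
proof (cases "t = 0")
  case True
  have "act swap (plane_of (- (0^3), 3 * 0^2, - 3 * 0, 1)) = plane_of (1, 0, 0, (0::'a))"
  proof (rule act_plane_of[OF gact_linear4 gact_linear4 swap_swap swap_swap])
    fix y :: "'a vec4"
    show "dot (- (0^3), 3 * 0^2, - 3 * 0, 1) (swap y) = 0 \<longleftrightarrow> dot (1, 0, 0, 0) y = 0"
      by (cases y rule: prod_cases4) simp
  qed
  then show ?thesis unfolding osc_plane_def osc_inf_def using True by simp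
next
  case False
  have "act swap (plane_of (- (t^3), 3 * t^2, - 3 * t, 1))
      = plane_of (- ((1 / t)^3), 3 * (1 / t)^2, - 3 * (1 / t), 1)"
  proof (rule act_plane_of[OF gact_linear4 gact_linear4 swap_swap swap_swap])
    fix y :: "'a vec4"
    obtain y0 y1 y2 y3 where y: "y = (y0, y1, y2, y3)" by (cases y rule: prod_cases4)
    have "dot (- (t^3), 3 * t^2, - 3 * t, 1) (swap y)
        = - (t^3) * dot (- ((1 / t)^3), 3 * (1 / t)^2, - 3 * (1 / t), 1) y"
      unfolding y using False by (simp add: power2_eq_square power3_eq_cube field_simps)
    then show "dot (- (t^3), 3 * t^2, - 3 * t, 1) (swap y) = 0
        \<longleftrightarrow> dot (- ((1 / t)^3), 3 * (1 / t)^2, - 3 * (1 / t), 1) y = 0"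
      using False by simp
  qed
  then show ?thesis unfolding osc_plane_def using False by simp
qed

lemma act_swap_osc_inf: "act swap osc_inf = osc_plane 0"
  unfolding osc_plane_def osc_inf_def
proof (rule act_plane_of[OF gact_linear4 gact_linear4 swap_swap swap_swap])
  fix y :: "'a vec4"
  show "dot (1, 0, 0, 0) (swap y) = 0 \<longleftrightarrow> dot (- (0^3), 3 * 0^2, - 3 * 0, 1) y = 0"
    by (cases y rule: prod_cases4) simp
qed

lemma act_swap_tan_line: "act swap (tan_line t) = (if t = 0 then tan_inf else tan_line (1 / t))"
proof (cases "t = 0")
  case True
  then show ?thesis unfolding tan_line_def tan_inf_def by (simp add: act_line_of gact_linear4)
next
  case False
  have "act swap (tan_line t) = line_of (t^3, t^2, t, 1) (3 * t^2, 2 * t, 1, 0)"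
    unfolding tan_line_def by (simp add: act_line_of gact_linear4)
  also have "\<dots> = tan_line (1 / t)"
    unfolding tan_line_def
  proof (rule line_of_change_basis[of _ "t^3" _ 0 _ _ "3 * t^2" "- t"])
    show "(t^3, t^2, t, 1) = vadd (sm (t^3) (1, 1 / t, (1 / t)^2, (1 / t)^3)) (sm 0 (0, 1, 2 * (1 / t), 3 * (1 / t)^2))"
      "(3 * t^2, 2 * t, 1, 0) = vadd (sm (3 * t^2) (1, 1 / t, (1 / t)^2, (1 / t)^3)) (sm (- t) (0, 1, 2 * (1 / t), 3 * (1 / t)^2))"
      using False by (simp_all add: power2_eq_square power3_eq_cube field_simps)
    show "t^3 * - t - 0 * (3 * t^2) \<noteq> 0" using False by simp
  qed
  finally show ?thesis using False by simp
qed

lemma act_swap_tan_inf: "act swap tan_inf = tan_line 0"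
  unfolding tan_line_def tan_inf_def by (simp add: act_line_of gact_linear4)

lemma cubic_collineation_swap: "cubic_collineation swap swap"
proof (rule cubic_collineationI[OF gact_linear4 swap_swap swap_swap])
  show TC: "act_pt swap ` TC \<subseteq> TC"
    unfolding TC_def image_Un image_insert image_empty image_image
    by (simp add: act_pt_swap_cubic_pt act_pt_swap_cubic_inf image_subset_iff)
  show Osc: "act swap ` Osc \<subseteq> Osc"
    unfolding Osc_def image_Un image_insert image_empty image_image
    by (simp add: act_swap_osc_plane act_swap_osc_inf image_subset_iff)
  show Tan: "act swap ` Tan \<subseteq> Tan"
    unfolding Tan_eq image_Un image_insert image_empty image_image
    by (simp add: act_swap_tan_line act_swap_tan_inf image_subset_iff)
  show "act_pt swap ` TC \<subseteq> TC" "act swap ` Osc \<subseteq> Osc" "act swap ` Tan \<subseteq> Tan"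
    by (fact TC Osc Tan)+
qed

section \<open>The lines of \<open>L3\<close> through \<open>P(\<infinity>)\<close>\<close>

definition Linf :: "'a::field \<Rightarrow> 'a vec4 set set" where
  "Linf s = line_of (0, 0, 0, 1) (0, 1, s, 0)"

lemma indep_Linf: "indep (0, 0, 0, 1) (0, 1, s, 0)"
  unfolding indep_def by (simp add: zero4_def)

lemma card_Linf_Int:
  fixes K :: "'a::{field,finite} vec4 set set"
  shows "card (Linf s \<inter> K) = (if cubic_inf \<in> K then 1 else 0) + card {\<mu>. proj_pt (0, 1, s, \<mu>) \<in> K}"
  unfolding Linf_def card_line_of_Int[OF indep_Linf] cubic_inf_def by simp

lemma Linf_eq: "Linf s = insert cubic_inf (range (\<lambda>\<mu>. proj_pt (0, 1, s, \<mu>)))"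
  unfolding Linf_def line_of_affine_param[OF indep_Linf] cubic_inf_def by simp

lemma Linf_in_lines: "Linf s \<in> lines"
  unfolding Linf_def lines_def using indep_Linf by blast

lemma proj_pt_Linf_notin_TC: "proj_pt (0, 1, s, \<mu>) \<notin> TC"
  unfolding TC_def cubic_pt_def cubic_inf_def by (auto dest!: proj_pt_eqD)

lemma proj_pt_Linf_in_points: "proj_pt (0, 1, s, \<mu>) \<in> points"
  by (rule proj_pt_in_points) (simp add: zero4_def)

lemma proj_pt_Linf_in_osc_inf: "proj_pt (0, 1, s, \<mu>) \<in> osc_inf"
  unfolding proj_pt_in_osc_inf_iff by (simp add: zero4_def)

lemma twelve_neq_zero:
  assumes "(2::'a::field) \<noteq> 0" "(3::'a) \<noteq> 0"
  shows "(12::'a) \<noteq> 0"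
proof -
  have twelve: "(12::'a) = 2 * (2 * 3)" by simp
  show ?thesis unfolding twelve mult_eq_0_iff using assms by blast
qed

text \<open>Besides \<open>P(\<infinity>)\<close>, the class of the point \<open>(0, 1, s, \<mu>)\<close> is decided by the discriminant
  \<open>9 s\<^sup>2 - 12 \<mu>\<close> of the quadratic whose roots are the osculating planes \<open>\<Pi>(t)\<close> through it.\<close>

lemma proj_pt_Linf_in_P2_iff:
  fixes s \<mu> :: "'a::field"
  assumes two: "(2::'a) \<noteq> 0" and three: "(3::'a) \<noteq> 0"
  shows "proj_pt (0, 1, s, \<mu>) \<in> P2 \<longleftrightarrow> 9 * s^2 + (- 12) * \<mu> = 0"
proof
  assume "proj_pt (0, 1, s, \<mu>) \<in> P2"
  then obtain m where m: "m \<in> Tan" "proj_pt (0, 1, s, \<mu>) \<in> m" unfolding P2_def by blast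
  then consider t where "m = tan_line t" | "m = tan_inf"
    unfolding Tan_eq by blast
  then show "9 * s^2 + (- 12) * \<mu> = 0"
  proof cases
    case 1
    then obtain a b where "(0, 1, s, \<mu>) = vadd (sm a (1, t, t^2, t^3)) (sm b (0, 1, 2 * t, 3 * t^2))"
      using m proj_pt_in_line_ofD unfolding tan_line_def by metis
    then have "s = 2 * t" "\<mu> = 3 * t^2" by auto
    then show ?thesis by (simp add: power2_eq_square algebra_simps)
  next
    case 2
    then show ?thesis
      using m proj_pt_in_line_ofD unfolding tan_inf_def by fastforce
  qed
next
  assume disc: "9 * s^2 + (- 12) * \<mu> = 0"
  define t where "t = s / 2"
  have s: "s = 2 * t" using two unfolding t_def by simp
  have "12 * \<mu> = 12 * (3 * t^2)"
    using disc unfolding s by (simp add: power2_eq_square algebra_simps)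
  then have "\<mu> = 3 * t^2" using twelve_neq_zero[OF two three] mult_left_cancel by blast
  then have "(0, 1, s, \<mu>) = vadd (sm 0 (1, t, t^2, t^3)) (sm 1 (0, 1, 2 * t, 3 * t^2))"
    using s by simp
  then have "proj_pt (0, 1, s, \<mu>) \<in> tan_line t"
    unfolding tan_line_def using line_ofI[of 0 1] by (metis one_neq_zero)
  then show "proj_pt (0, 1, s, \<mu>) \<in> P2"
    unfolding P2_def Tan_eq using proj_pt_Linf_in_points proj_pt_Linf_notin_TC by blast
qed

lemma card_Osc_through_Linf_point:
  fixes s \<mu> :: "'a::{field,finite}"
  assumes two: "(2::'a) \<noteq> 0" and three: "(3::'a) \<noteq> 0"
  shows "card {\<pi> \<in> Osc. proj_pt (0, 1, s, \<mu>) \<in> \<pi>} = 1 + card {y. y^2 = 9 * s^2 + (- 12) * \<mu>}"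
proof -
  have "{t. proj_pt (0, 1, s, \<mu>) \<in> osc_plane t} = {t. 3 * t^2 + (- 3 * s) * t + \<mu> = 0}"
    unfolding proj_pt_in_osc_plane_iff by (simp add: zero4_def algebra_simps)
  moreover have "card {t. 3 * t^2 + (- 3 * s) * t + \<mu> = 0} = card {y. y^2 = (- 3 * s)^2 - 4 * 3 * \<mu>}"
    by (rule card_quadratic_roots[OF two three])
  moreover have "(- 3 * s)^2 - 4 * 3 * \<mu> = 9 * s^2 + (- 12) * \<mu>"
    by (simp add: power2_eq_square algebra_simps)
  ultimately show ?thesis
    unfolding card_Osc_through using proj_pt_Linf_in_osc_inf by simp
qed

lemma proj_pt_Linf_point_class_iff:
  fixes s \<mu> :: "'a::{field,finite}"
  assumes two: "(2::'a) \<noteq> 0" and three: "(3::'a) \<noteq> 0"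
  shows "proj_pt (0, 1, s, \<mu>) \<in> P3 \<longleftrightarrow> nonzero_square (9 * s^2 + (- 12) * \<mu>)"
    and "proj_pt (0, 1, s, \<mu>) \<in> P4 \<longleftrightarrow> nonsquare (9 * s^2 + (- 12) * \<mu>)"
    and "proj_pt (0, 1, s, \<mu>) \<notin> P5"
proof -
  let ?d = "9 * s^2 + (- 12) * \<mu>"
  have card: "card {\<pi> \<in> Osc. proj_pt (0, 1, s, \<mu>) \<in> \<pi>}
      = 1 + (if ?d = 0 then 1 else if nonzero_square ?d then 2 else 0)"
    using card_Osc_through_Linf_point[OF two three] card_sqrt[OF two] by simp
  show "proj_pt (0, 1, s, \<mu>) \<in> P3 \<longleftrightarrow> nonzero_square ?d"
    unfolding P3_def using card proj_pt_Linf_in_points proj_pt_Linf_notin_TC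
    by (auto simp: nonzero_square_def)
  show "proj_pt (0, 1, s, \<mu>) \<in> P4 \<longleftrightarrow> nonsquare ?d"
    unfolding P4_def using card proj_pt_Linf_in_points proj_pt_Linf_notin_TC
    by (auto simp: nonsquare_iff)
  show "proj_pt (0, 1, s, \<mu>) \<notin> P5"
    unfolding P5_def Osc_def using proj_pt_Linf_in_osc_inf by blast
qed

lemma cubic_inf_point_class:
  "cubic_inf \<in> P1" "cubic_inf \<notin> P2" "cubic_inf \<notin> P3" "cubic_inf \<notin> P4" "cubic_inf \<notin> P5"
  unfolding P1_def P2_def P3_def P4_def P5_def TC_def Osc_def by auto

lemma OD0_Linf:
  fixes s :: "'a::{field,finite}"
  assumes two: "(2::'a) \<noteq> 0" and three: "(3::'a) \<noteq> 0"
  shows "OD0 (Linf s) = [1, 1, (card (UNIV :: 'a set) - 1) div 2, (card (UNIV :: 'a set) - 1) div 2, 0]"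
proof -
  have twelve: "(- 12::'a) \<noteq> 0" using twelve_neq_zero[OF two three] by simp
  have "card (Linf s \<inter> P1) = 1"
    unfolding card_Linf_Int by (simp add: P1_def proj_pt_Linf_notin_TC cubic_inf_point_class(1)[unfolded P1_def])
  moreover have "card (Linf s \<inter> P2) = 1"
    unfolding card_Linf_Int using cubic_inf_point_class proj_pt_Linf_in_P2_iff[OF two three]
      card_affine_substitution[OF twelve, of "\<lambda>y. y = 0" "9 * s^2"] by simp
  moreover have "card (Linf s \<inter> P3) = (card (UNIV :: 'a set) - 1) div 2"
    unfolding card_Linf_Int using cubic_inf_point_class proj_pt_Linf_point_class_iff[OF two three]
      card_affine_substitution[OF twelve, of nonzero_square "9 * s^2"] card_nonzero_squares[OF two]
    by simp
  moreover have "card (Linf s \<inter> P4) = (card (UNIV :: 'a set) - 1) div 2"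
    unfolding card_Linf_Int using cubic_inf_point_class proj_pt_Linf_point_class_iff[OF two three]
      card_affine_substitution[OF twelve, of nonsquare "9 * s^2"] card_nonsquares[OF two]
    by simp
  moreover have "card (Linf s \<inter> P5) = 0"
    unfolding card_Linf_Int using cubic_inf_point_class proj_pt_Linf_point_class_iff(3)[OF two three]
    by simp
  ultimately show ?thesis unfolding OD0_def by simp
qed

definition Linf_plane :: "'a::field \<Rightarrow> 'a \<Rightarrow> 'a vec4 set set" where
  "Linf_plane s m = plane_of (m, - s, 1, 0)"

lemma planes_through_Linf:
  assumes "\<pi> \<in> planes"
  shows "Linf s \<subseteq> \<pi> \<longleftrightarrow> \<pi> = osc_inf \<or> (\<exists>m. \<pi> = Linf_plane s m)"
proof
  assume sub: "Linf s \<subseteq> \<pi>"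
  obtain h0 h1 h2 h3 where h: "\<pi> = plane_of (h0, h1, h2, h3)" "(h0, h1, h2, h3) \<noteq> zero4"
    using assms unfolding planes_def by auto
  have "proj_pt (0, 0, 0, 1) \<in> \<pi>" "proj_pt (0, 1, s, 0) \<in> \<pi>"
    using sub proj_pt_in_line_of unfolding Linf_def by blast+
  then have h3: "h3 = 0" and h1: "h1 = - s * h2"
    unfolding h proj_pt_in_plane_of_iff by (simp_all add: algebra_simps add_eq_0_iff2)
  show "\<pi> = osc_inf \<or> (\<exists>m. \<pi> = Linf_plane s m)"
  proof (cases "h2 = 0")
    case True
    then have "h0 \<noteq> 0" "(h0, h1, h2, h3) = sm h0 (1, 0, 0, 0)"
      using h(2) h1 h3 by (auto simp: zero4_def)
    then show ?thesis unfolding h osc_inf_def by (metis plane_of_sm)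
  next
    case False
    then have "(h0, h1, h2, h3) = sm h2 (h0 / h2, - s, 1, 0)"
      using h1 h3 by simp
    then show ?thesis unfolding h Linf_plane_def using False by (metis plane_of_sm)
  qed
next
  have "Linf s \<subseteq> osc_inf" "Linf s \<subseteq> Linf_plane s m" for m
    unfolding Linf_def osc_inf_def Linf_plane_def
    by (rule line_of_subset_plane_of[OF indep_Linf]; simp)+
  then show "\<pi> = osc_inf \<or> (\<exists>m. \<pi> = Linf_plane s m) \<Longrightarrow> Linf s \<subseteq> \<pi>"
    by blast
qed

lemma Linf_plane_in_planes: "Linf_plane s m \<in> planes"
  unfolding Linf_plane_def by (rule plane_of_in_planes) (simp add: zero4_def)

lemma Linf_plane_inj: "inj (Linf_plane s)"
proof (rule injI)
  fix m m' assume eq: "Linf_plane s m = Linf_plane s m'"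
  have "proj_pt (1, 0, - m, 0) \<in> Linf_plane s m"
    unfolding Linf_plane_def proj_pt_in_plane_of_iff by (simp add: zero4_def)
  then have "proj_pt (1, 0, - m, 0) \<in> Linf_plane s m'"
    by (simp only: eq)
  then show "m = m'"
    unfolding Linf_plane_def proj_pt_in_plane_of_iff by simp
qed

lemma cubic_inf_in_Linf_plane: "cubic_inf \<in> Linf_plane s m"
  unfolding Linf_plane_def cubic_inf_def proj_pt_in_plane_of_iff by (simp add: zero4_def)

lemma Linf_plane_notin_Osc: "Linf_plane s m \<notin> Osc"
proof
  assume "Linf_plane s m \<in> Osc"
  moreover have "Linf_plane s m \<noteq> osc_plane t" for t
    using cubic_inf_in_Linf_plane cubic_inf_notin_osc_plane by metis
  moreover have "proj_pt (1, 0, - m, 0) \<in> Linf_plane s m" "proj_pt (1, 0, - m, 0) \<notin> osc_inf"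
    unfolding Linf_plane_def proj_pt_in_plane_of_iff proj_pt_in_osc_inf_iff by (simp_all add: zero4_def)
  ultimately show False unfolding Osc_def by blast
qed

lemma card_Linf_plane_Int_TC:
  fixes s m :: "'a::{field,finite}"
  assumes two: "(2::'a) \<noteq> 0"
  shows "card (Linf_plane s m \<inter> TC)
    = 1 + (if s^2 + (- 4) * m = 0 then 1 else if nonzero_square (s^2 + (- 4) * m) then 2 else 0)"
proof -
  have "{t. cubic_pt t \<in> Linf_plane s m} = {t. 1 * t^2 + (- s) * t + m = 0}"
    unfolding Linf_plane_def cubic_pt_def proj_pt_in_plane_of_iff by (simp add: zero4_def algebra_simps)
  moreover have "card {t. 1 * t^2 + (- s) * t + m = 0} = card {y. y^2 = (- s)^2 - 4 * 1 * m}"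
    by (rule card_quadratic_roots[OF two]) simp
  ultimately show ?thesis
    unfolding card_Int_TC using cubic_inf_in_Linf_plane card_sqrt[OF two] by simp
qed

lemma card_planes_through_Linf:
  assumes "K \<subseteq> planes" "osc_inf \<notin> K"
  shows "card {\<pi> \<in> K. Linf s \<subseteq> \<pi>} = card {m. Linf_plane s m \<in> K}"
proof -
  have "{\<pi> \<in> K. Linf s \<subseteq> \<pi>} = Linf_plane s ` {m. Linf_plane s m \<in> K}"
  proof (intro set_eqI iffI)
    fix \<pi> assume "\<pi> \<in> {\<pi> \<in> K. Linf s \<subseteq> \<pi>}"
    then have "\<pi> \<in> K" "\<pi> = osc_inf \<or> (\<exists>m. \<pi> = Linf_plane s m)"
      using assms(1) planes_through_Linf by blast+
    then show "\<pi> \<in> Linf_plane s ` {m. Linf_plane s m \<in> K}"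
      using assms(2) by blast
  next
    fix \<pi> assume "\<pi> \<in> Linf_plane s ` {m. Linf_plane s m \<in> K}"
    then show "\<pi> \<in> {\<pi> \<in> K. Linf s \<subseteq> \<pi>}"
      using planes_through_Linf[OF Linf_plane_in_planes] by blast
  qed
  then show ?thesis
    by (simp add: card_image inj_on_subset[OF Linf_plane_inj])
qed

lemma Linf_subset_osc_inf: "Linf s \<subseteq> osc_inf"
  using planes_through_Linf Osc_subset_planes osc_inf_in_Osc by blast

lemma H1_through_Linf: "{\<pi> \<in> H1. Linf s \<subseteq> \<pi>} = {osc_inf}"
proof (intro set_eqI iffI)
  fix \<pi> assume "\<pi> \<in> {\<pi> \<in> H1. Linf s \<subseteq> \<pi>}"
  then have "\<pi> \<in> Osc" "\<pi> = osc_inf \<or> (\<exists>m. \<pi> = Linf_plane s m)"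
    unfolding H1_def using Osc_subset_planes planes_through_Linf by blast+
  then show "\<pi> \<in> {osc_inf}" using Linf_plane_notin_Osc by blast
qed (use Linf_subset_osc_inf osc_inf_in_Osc in \<open>auto simp: H1_def\<close>)

lemma osc_inf_Int_TC: "osc_inf \<inter> TC = {cubic_inf}"
  unfolding TC_def by auto

lemma H_through_Linf:
  assumes "K \<in> {H2, H3, H4, H5}"
  shows "card {\<pi> \<in> K. Linf s \<subseteq> \<pi>} = card {m. Linf_plane s m \<in> K}"
proof (rule card_planes_through_Linf)
  show "K \<subseteq> planes" "osc_inf \<notin> K"
    using assms unfolding H2_def H3_def H4_def H5_def by (auto simp: osc_inf_Int_TC osc_inf_in_Osc)
qed

lemma OD2_Linf:
  fixes s :: "'a::{field,finite}"
  assumes two: "(2::'a) \<noteq> 0"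
  shows "OD2 (Linf s) = [1, 1, (card (UNIV :: 'a set) - 1) div 2, (card (UNIV :: 'a set) - 1) div 2, 0]"
proof -
  have four: "(- 4::'a) \<noteq> 0"
    using two by (metis mult_2 mult_eq_0_iff neg_equal_0_iff_equal numeral_Bit0 one_add_one)
  let ?d = "\<lambda>m. s^2 + (- 4) * m"
  have card_TC: "card (Linf_plane s m \<inter> TC)
      = 1 + (if ?d m = 0 then 1 else if nonzero_square (?d m) then 2 else 0)" for m
    by (rule card_Linf_plane_Int_TC[OF two])
  have "{m. Linf_plane s m \<in> H2} = {m. ?d m = 0}"
    unfolding H2_def using Linf_plane_in_planes card_TC by auto
  then have 2: "card {\<pi> \<in> H2. Linf s \<subseteq> \<pi>} = 1"
    using H_through_Linf[of H2 s] card_affine_substitution[OF four, of "\<lambda>y. y = 0" "s^2"] by simp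
  have "{m. Linf_plane s m \<in> H3} = {m. nonzero_square (?d m)}"
    unfolding H3_def using Linf_plane_in_planes card_TC by (auto simp: nonzero_square_def)
  then have 3: "card {\<pi> \<in> H3. Linf s \<subseteq> \<pi>} = (card (UNIV :: 'a set) - 1) div 2"
    using H_through_Linf[of H3 s] card_affine_substitution[OF four, of nonzero_square "s^2"]
      card_nonzero_squares[OF two]
    by simp
  have "{m. Linf_plane s m \<in> H4} = {m. nonsquare (?d m)}"
    unfolding H4_def using Linf_plane_in_planes card_TC by (auto simp: nonsquare_iff Linf_plane_notin_Osc)
  then have 4: "card {\<pi> \<in> H4. Linf s \<subseteq> \<pi>} = (card (UNIV :: 'a set) - 1) div 2"
    using H_through_Linf[of H4 s] card_affine_substitution[OF four, of nonsquare "s^2"] card_nonsquares[OF two]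
    by simp
  have "{m. Linf_plane s m \<in> H5} = {}"
    unfolding H5_def using cubic_inf_in_Linf_plane cubic_inf_in_TC by blast
  then have 5: "card {\<pi> \<in> H5. Linf s \<subseteq> \<pi>} = 0"
    using H_through_Linf[of H5 s] by simp
  show ?thesis unfolding OD2_def using H1_through_Linf[of s] 2 3 4 5 by simp
qed

lemma Linf_in_L3: "Linf s \<in> L3"
proof -
  have "Linf s \<inter> TC = {cubic_inf}"
    unfolding Linf_eq using proj_pt_Linf_notin_TC cubic_inf_in_TC by blast
  then have "card (Linf s \<inter> TC) = 1" by simp
  moreover note Linf_subset_osc_inf
  moreover have "Linf s \<noteq> tan_line t" for t
  proof
    assume "Linf s = tan_line t"
    then have "cubic_pt t \<in> Linf s"
      unfolding tan_line_def cubic_pt_def using proj_pt_in_line_of(1) by metis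
    then show False
      unfolding Linf_eq using proj_pt_Linf_notin_TC by (auto simp: TC_def)
  qed
  moreover have "Linf s \<noteq> tan_inf"
  proof
    assume "Linf s = tan_inf"
    then have "proj_pt (0, 1, s, 0) \<in> tan_inf"
      unfolding Linf_def using proj_pt_in_line_of(2) by metis
    then show False
      unfolding tan_inf_def using proj_pt_in_line_ofD by fastforce
  qed
  ultimately show ?thesis
    unfolding L3_def Tan_eq using Linf_in_lines osc_inf_in_Osc by blast
qed

lemma line_of_rebase:
  assumes ind: "indep u w" and p: "proj_pt p \<in> line_of u w" "p \<noteq> zero4"
  obtains x where "line_of u w = line_of p x" "indep p x"
proof -
  obtain \<alpha> \<beta> where p_eq: "p = vadd (sm \<alpha> u) (sm \<beta> w)"
    using proj_pt_in_line_ofD[OF p(1)] by blast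
  show ?thesis
  proof (cases "\<beta> = 0")
    case False
    have u: "u = vadd (sm 1 u) (sm 0 w)" by simp
    have "\<alpha> * 0 - \<beta> * 1 \<noteq> 0" using False by simp
    then show ?thesis
      using that line_of_change_basis[OF p_eq u] indep_change_basis[OF ind p_eq u] by metis
  next
    case True
    then have "\<alpha> \<noteq> 0" using p by (auto simp: p_eq)
    have w: "w = vadd (sm 0 u) (sm 1 w)" by simp
    have "\<alpha> * 1 - \<beta> * 0 \<noteq> 0" using \<open>\<alpha> \<noteq> 0\<close> by simp
    then show ?thesis
      using that line_of_change_basis[OF p_eq w] indep_change_basis[OF ind p_eq w] by metis
  qed
qed

lemma L3_through_cubic_inf:
  assumes l: "l \<in> L3" and inf: "cubic_inf \<in> l"
  obtains s where "l = Linf s"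
proof -
  obtain u w where uw: "l = line_of u w" "indep u w"
    using l unfolding L3_def lines_def by blast
  obtain \<pi> where "\<pi> \<in> Osc" "l \<subseteq> \<pi>"
    using l unfolding L3_def by blast
  moreover from this have "cubic_inf \<in> \<pi>" using inf by blast
  ultimately have sub: "l \<subseteq> osc_inf"
    unfolding Osc_def by auto
  have "proj_pt (0, 0, 0, 1) \<in> line_of u w" "(0, 0, 0, 1) \<noteq> zero4"
    using inf uw(1) unfolding cubic_inf_def by (simp_all add: zero4_def)
  then obtain x where x: "l = line_of (0, 0, 0, 1) x" "indep (0, 0, 0, 1) x"
    using line_of_rebase[OF uw(2)] uw(1) by metis
  obtain x0 x1 x2 x3 where xx: "x = (x0, x1, x2, x3)" by (cases x rule: prod_cases4)
  have "proj_pt x \<in> osc_inf" using sub x(1) proj_pt_in_line_of(2) by blast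
  then have x0: "x0 = 0" unfolding xx proj_pt_in_osc_inf_iff by simp
  have base: "(0, 0, 0, 1) = vadd (sm 1 (0, 0, 0, 1)) (sm 0 x)" by simp
  show ?thesis
  proof (cases "x1 = 0")
    case False
    have "(0, 1, x2 / x1, 0) = vadd (sm (- x3 / x1) (0, 0, 0, 1)) (sm (1 / x1) x)"
      unfolding xx x0 using False by simp
    from line_of_change_basis[OF base this] have "Linf (x2 / x1) = l"
      unfolding Linf_def x(1) using False by simp
    then show ?thesis using that by blast
  next
    case True
    have "x2 \<noteq> 0"
    proof
      assume "x2 = 0"
      then have "vadd (sm x3 (0, 0, 0, 1)) (sm (- 1) x) = zero4"
        unfolding xx x0 True by (simp add: zero4_def)
      then show False using x(2) unfolding indep_def by fastforce
    qed
    have "(0, 0, 1, 0) = vadd (sm (- x3 / x2) (0, 0, 0, 1)) (sm (1 / x2) x)"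
      unfolding xx x0 True using \<open>x2 \<noteq> 0\<close> by simp
    from line_of_change_basis[OF base this] have "tan_inf = l"
      unfolding tan_inf_def x(1) using \<open>x2 \<noteq> 0\<close> by simp
    then show ?thesis using l unfolding L3_def Tan_eq by blast
  qed
qed

definition L3_normal_forms :: "'a::field vec4 set set set" where
  "L3_normal_forms = range Linf \<union> {act (shift t) (act swap (Linf s)) | s t. True}"

lemma L3_subset_normal_forms: "L3 \<subseteq> (L3_normal_forms :: 'a::{field,finite} vec4 set set set)"
proof
  fix l :: "'a vec4 set set" assume l: "l \<in> L3"
  then have "card (l \<inter> TC) = 1" unfolding L3_def by blast
  then obtain Q where "l \<inter> TC = {Q}" by (rule card_1_singletonE)
  then have "Q \<in> l" "Q = cubic_inf \<or> (\<exists>t. Q = cubic_pt t)"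
    unfolding TC_def by auto
  then consider "cubic_inf \<in> l" | t where "cubic_pt t \<in> l"
    by blast
  then show "l \<in> L3_normal_forms"
  proof cases
    case 1
    obtain s where "l = Linf s" by (rule L3_through_cubic_inf[OF l 1])
    then show ?thesis unfolding L3_normal_forms_def by simp
  next
    case 2
    interpret shift_back: cubic_collineation "shift (- t)" "shift (- (- t))"
      by (rule cubic_collineation_shift)
    interpret swap: cubic_collineation swap swap
      by (rule cubic_collineation_swap)
    have "act_pt swap (act_pt (shift (- t)) (cubic_pt t)) \<in> act swap (act (shift (- t)) l)"
      using 2 by simp
    moreover have "act_pt swap (act_pt (shift (- t)) (cubic_pt t)) = cubic_inf"
      by (simp add: act_pt_shift_cubic_pt act_pt_swap_cubic_pt)
    moreover have "act swap (act (shift (- t)) l) \<in> L3"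
      using l by (simp add: shift_back.act_in_L3 swap.act_in_L3)
    ultimately obtain s where "act swap (act (shift (- t)) l) = Linf s"
      using L3_through_cubic_inf by metis
    then have "act (shift t) (act swap (act swap (act (shift (- t)) l))) = act (shift t) (act swap (Linf s))"
      by simp
    then have "l = act (shift t) (act swap (Linf s))"
      using shift_back.act_inverse(1)[of l] by simp
    then show ?thesis unfolding L3_normal_forms_def by blast
  qed
qed

lemma normal_forms_subset_L3: "L3_normal_forms \<subseteq> L3"
proof -
  have "act (shift t) (act swap (Linf s)) \<in> L3" for s t
    using cubic_collineation.act_in_L3[OF cubic_collineation_shift]
      cubic_collineation.act_in_L3[OF cubic_collineation_swap] Linf_in_L3 by blast
  then show ?thesis unfolding L3_normal_forms_def using Linf_in_L3 by blast
qed

lemma OD_normal_forms: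
  fixes l :: "'a::{field,finite} vec4 set set"
  assumes "l \<in> L3_normal_forms"
  obtains s :: 'a where "OD0 l = OD0 (Linf s)" "OD2 l = OD2 (Linf s)"
proof -
  have act_OD: "OD0 (act (shift t) (act swap (Linf s))) = OD0 (Linf s)"
       "OD2 (act (shift t) (act swap (Linf s))) = OD2 (Linf s)" for s t :: 'a
    by (simp_all add: cubic_collineation.OD0_act[OF cubic_collineation_shift]
        cubic_collineation.OD0_act[OF cubic_collineation_swap]
        cubic_collineation.OD2_act[OF cubic_collineation_shift]
        cubic_collineation.OD2_act[OF cubic_collineation_swap])
  from assms consider s where "l = Linf s" | s t where "l = act (shift t) (act swap (Linf s))"
    unfolding L3_normal_forms_def by blast
  then show ?thesis
  proof cases
    case (1 s)
    show ?thesis by (rule that[of s]) (simp_all add: 1)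
  next
    case (2 s t)
    show ?thesis by (rule that[of s]) (simp_all add: 2 act_OD)
  qed
qed

lemma orbit_eq: "(\<lambda>g. g ` l0) ` Gmaps = {act (gact a b c d) l0 | a b c d. a * d - b * c \<noteq> 0}"
proof (intro set_eqI iffI)
  fix l assume "l \<in> (\<lambda>g. g ` l0) ` Gmaps"
  then obtain a b c d where "a * d - b * c \<noteq> 0" "l = (\<lambda>P. gact a b c d ` P) ` l0"
    unfolding Gmaps_def by blast
  then show "l \<in> {act (gact a b c d) l0 | a b c d. a * d - b * c \<noteq> 0}"
    unfolding act_def act_pt_def by blast
next
  fix l assume "l \<in> {act (gact a b c d) l0 | a b c d. a * d - b * c \<noteq> 0}"
  then obtain a b c d where det: "a * d - b * c \<noteq> 0" and l: "l = (\<lambda>P. gact a b c d ` P) ` l0"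
    unfolding act_def act_pt_def by blast
  have "(\<lambda>P. gact a b c d ` P) \<in> Gmaps"
    using det unfolding Gmaps_def by blast
  then show "l \<in> (\<lambda>g. g ` l0) ` Gmaps"
    unfolding l by (rule imageI)
qed

lemma act_upper_triangular_Linf_0:
  fixes a b d :: "'a::field"
  assumes a: "a \<noteq> 0" and d: "d \<noteq> 0"
  shows "act (gact a b 0 d) (Linf 0) = Linf (2 * b / a)"
proof -
  have "act (gact a b 0 d) (Linf 0) = line_of (0, 0, 0, d^3) (0, a^2 * d, 2 * a * b * d, 3 * b^2 * d)"
    unfolding Linf_def act_line_of[OF gact_linear4] by (simp add: algebra_simps)
  also have "\<dots> = Linf (2 * b / a)"
  proof -
    have "(0, 0, 0, 1) = vadd (sm (1 / d^3) (0, 0, 0, d^3)) (sm 0 (0, a^2 * d, 2 * a * b * d, 3 * b^2 * d))"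
      using d by simp
    moreover have "(0, 1, 2 * b / a, 0) = vadd (sm (- 3 * b^2 / (a^2 * d^3)) (0, 0, 0, d^3))
        (sm (1 / (a^2 * d)) (0, a^2 * d, 2 * a * b * d, 3 * b^2 * d))"
      using a d by (simp add: field_simps power2_eq_square power3_eq_cube)
    moreover have "1 / d^3 * (1 / (a^2 * d)) - 0 * (- 3 * b^2 / (a^2 * d^3)) \<noteq> 0"
      using a d by simp
    ultimately show ?thesis
      unfolding Linf_def by (metis line_of_change_basis)
  qed
  finally show ?thesis .
qed

lemma gact_decompose:
  fixes a b c d :: "'a::field"
  assumes c: "c \<noteq> 0"
  shows "gact a b c d v = shift (d / c) (swap (gact ((b * c - a * d) / c) a 0 c v))"
proof -
  have "shift (d / c) (swap (gact ((b * c - a * d) / c) a 0 c v))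
      = gact a (a * (d / c) + (b * c - a * d) / c) c (c * (d / c)) v"
    by (simp add: gact_gact)
  moreover have "a * (d / c) + (b * c - a * d) / c = b" "c * (d / c) = d"
    using c by (simp_all add: field_simps)
  ultimately show ?thesis by simp
qed

lemma orbit_Linf_0_subset_normal_forms:
  fixes a b c d :: "'a::field"
  assumes det: "a * d - b * c \<noteq> 0"
  shows "act (gact a b c d) (Linf 0) \<in> L3_normal_forms"
proof (cases "c = 0")
  case True
  then have "act (gact a b c d) (Linf 0) = Linf (2 * b / a)"
    using det by (simp add: act_upper_triangular_Linf_0)
  then show ?thesis unfolding L3_normal_forms_def by simp
next
  case False
  let ?e = "(b * c - a * d) / c"
  have "?e \<noteq> 0" using det False by (simp add: algebra_simps)
  have "act (gact a b c d) (Linf 0) = act (shift (d / c)) (act swap (act (gact ?e a 0 c) (Linf 0)))"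
    unfolding act_act gact_decompose[OF False] ..
  also have "\<dots> = act (shift (d / c)) (act swap (Linf (2 * a / ?e)))"
    using \<open>?e \<noteq> 0\<close> False by (simp add: act_upper_triangular_Linf_0)
  finally show ?thesis unfolding L3_normal_forms_def by blast
qed

lemma normal_forms_subset_orbit_Linf_0:
  fixes l :: "'a::field vec4 set set"
  assumes two: "(2::'a) \<noteq> 0" and l: "l \<in> L3_normal_forms"
  shows "\<exists>a b c d. a * d - b * c \<noteq> 0 \<and> l = act (gact a b c d) (Linf 0)"
proof -
  have Linf_eq_act: "Linf s = act (gact 1 (s / 2) 0 1) (Linf 0)" for s :: 'a
    using act_upper_triangular_Linf_0[of 1 1 "s / 2"] two by simp
  from l consider s where "l = Linf s" | s t where "l = act (shift t) (act swap (Linf s))"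
    unfolding L3_normal_forms_def by blast
  then show ?thesis
  proof cases
    case (1 s)
    have "(1::'a) * 1 - s / 2 * 0 \<noteq> 0" by simp
    then show ?thesis using 1 Linf_eq_act[of s] by blast
  next
    case (2 s t)
    have "l = act (gact (s / 2) (s / 2 * t + 1) 1 t) (Linf 0)"
      unfolding 2 Linf_eq_act[of s] act_act by (simp add: gact_gact)
    moreover have "s / 2 * t - (s / 2 * t + 1) * 1 \<noteq> (0::'a)"
      by simp
    ultimately show ?thesis by blast
  qed
qed

lemma L3_eq_normal_forms: "(L3 :: 'a::{field,finite} vec4 set set set) = L3_normal_forms"
  using L3_subset_normal_forms normal_forms_subset_L3 by (rule subset_antisym)

lemma normal_forms_eq_orbit_Linf_0:
  assumes "(2::'a::field) \<noteq> 0"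
  shows "(L3_normal_forms :: 'a vec4 set set set) = (\<lambda>g. g ` Linf 0) ` Gmaps"
  unfolding orbit_eq
  using orbit_Linf_0_subset_normal_forms normal_forms_subset_orbit_Linf_0[OF assms] by blast

theorem mainTheorem3:
  assumes "(2::'a::{field,finite}) \<noteq> 0" and "(3::'a) \<noteq> 0"
  shows "(\<exists>l0. (L3 :: 'a vec4 set set set) = (\<lambda>g. g ` l0) ` Gmaps) \<and>
         (\<forall>l \<in> (L3 :: 'a vec4 set set set).
            OD2 l = [1, 1, (card (UNIV :: 'a set) - 1) div 2, (card (UNIV :: 'a set) - 1) div 2, 0] \<and>
            OD0 l = [1, 1, (card (UNIV :: 'a set) - 1) div 2, (card (UNIV :: 'a set) - 1) div 2, 0])"
proof (intro conjI ballI)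
  show "\<exists>l0. (L3 :: 'a vec4 set set set) = (\<lambda>g. g ` l0) ` Gmaps"
    using L3_eq_normal_forms normal_forms_eq_orbit_Linf_0[OF assms(1)] by blast
next
  fix l :: "'a vec4 set set"
  assume "l \<in> L3"
  then obtain s :: 'a where "OD0 l = OD0 (Linf s)" "OD2 l = OD2 (Linf s)"
    unfolding L3_eq_normal_forms by (rule OD_normal_forms)
  then show "OD2 l = [1, 1, (card (UNIV :: 'a set) - 1) div 2, (card (UNIV :: 'a set) - 1) div 2, 0]"
    and "OD0 l = [1, 1, (card (UNIV :: 'a set) - 1) div 2, (card (UNIV :: 'a set) - 1) div 2, 0]"
    using OD2_Linf[OF assms(1)] OD0_Linf[OF assms] by simp_all
qed

end
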